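(* There is a constant $C>0$ depending only on $d$ such that for all integers $j,p\ge0$, all $g_j\in\mathcal H^d_j$, $g_p\in\mathcal H^d_p$, all $\mathbf x\in\mathbb S^{d-1}$, and all $\ell\ge1$: with $f(\boldsymbol\xi)=K^\infty(\mathbf x,\boldsymbol\xi)g_j(\boldsymbol\xi)$ and $g_{jp}(\boldsymbol\xi)=g_j(\boldsymbol\xi)g_p(\boldsymbol\xi)$, $$\mathrm{dist}(f,\Pi^d_\ell)\le C\frac{j+1}{\ell}\|g_j\|_{L^\infty},\qquad\mathrm{dist}(g_{jp},\Pi^d_\ell)\le C\frac{j+p}{\ell}\|g_j\|_{L^\infty}\|g_p\|_{L^\infty}.$$
   Context: $d\ge2$; $\mathcal H^d_j$ is the space of spherical harmonics of degree $j$ on $\mathbb S^{d-1}$, $\Pi^d_\ell=\bigoplus_{i\le\ell}\mathcal H^d_i$, and $\mathrm{dist}(f,\Pi^d_\ell)=\min_{h\in\Pi^d_\ell}\|f-h\|_{L^\infty(\mathbb S^{d-1})}$. $K^\infty(\mathbf x,\mathbf y)=\frac{(\langle\mathbf x,\mathbf y\rangle+1)(\pi-\arccos\langle\mathbf x,\mathbf y\rangle)}{4\pi}$. *)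

theory Defs
  imports "HOL-Analysis.Analysis"
begin

text \<open>Points of R^d are vectors of type real^'n with d = CARD('n).
  The unit sphere S^{d-1} is sphere 0 1.\<close>

definition unit_sph :: "(real^'n) set" where
  "unit_sph = sphere 0 1"

definition homog_poly :: "nat \<Rightarrow> (real^'n \<Rightarrow> real) \<Rightarrow> bool" where
  "homog_poly j P \<longleftrightarrow> (\<exists>c :: ('n \<Rightarrow> nat) \<Rightarrow> real.
      \<forall>x. P x = (\<Sum>\<alpha>\<in>{\<alpha>. (\<Sum>i\<in>UNIV. \<alpha> i) = j}. c \<alpha> * (\<Prod>i\<in>UNIV. (x $ i) ^ \<alpha> i)))"

definition partial_i :: "'n \<Rightarrow> (real^'n \<Rightarrow> real) \<Rightarrow> real^'n \<Rightarrow> real" where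
  "partial_i i P x = deriv (\<lambda>t. P (x + t *\<^sub>R axis i 1)) 0"

definition laplacian :: "(real^'n \<Rightarrow> real) \<Rightarrow> real^'n \<Rightarrow> real" where
  "laplacian P x = (\<Sum>i\<in>UNIV. partial_i i (partial_i i P) x)"

definition sph_harm :: "nat \<Rightarrow> (real^'n \<Rightarrow> real) set" where
  "sph_harm j = {g. \<exists>P. homog_poly j P \<and> (\<forall>x. laplacian P x = 0) \<and>
                       (\<forall>\<xi>\<in>unit_sph. g \<xi> = P \<xi>)}"

definition Pi_sph :: "nat \<Rightarrow> (real^'n \<Rightarrow> real) set" where
  "Pi_sph l = {h. \<exists>g. (\<forall>i\<le>l. g i \<in> sph_harm i) \<and>
                     (\<forall>\<xi>\<in>unit_sph. h \<xi> = (\<Sum>i\<le>l. g i \<xi>))}"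

definition sup_norm_sph :: "(real^'n \<Rightarrow> real) \<Rightarrow> real" where
  "sup_norm_sph f = (SUP \<xi>\<in>unit_sph. \<bar>f \<xi>\<bar>)"

definition dist_Pi :: "(real^'n \<Rightarrow> real) \<Rightarrow> nat \<Rightarrow> real" where
  "dist_Pi f l = (INF h\<in>Pi_sph l. sup_norm_sph (\<lambda>\<xi>. f \<xi> - h \<xi>))"

definition K_inf :: "real^'n \<Rightarrow> real^'n \<Rightarrow> real" where
  "K_inf x y = ((x \<bullet> y + 1) * (pi - arccos (x \<bullet> y))) / (4 * pi)"

end

theory Submission
  imports Defs "HOL-Analysis.Analysis"
begin

text \<open>
  By Fischer's decomposition P = H + |x|^2 Q (H harmonic), and since |x|^2 = 1 on the sphere,
  the restriction of any polynomial of degree at most l lies in \<Pi>_l. Hence g_j g_p \<in> \<Pi>_l when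
  j + p \<le> l, and otherwise the trivial bound |g_j| |g_p| already suffices.

  For the kernel, K(x,\<xi>) = (t + 1)(\<pi>/2 + arcsin t)/(4\<pi>) with t = x \<bullet> \<xi>, and
  arcsin t = (4/\<pi>) \<Sum>_n T_{2n+1}(t)/(2n+1)^2 is the Chebyshev form of the Fourier series
  of a triangle wave. Truncating after N terms costs at most 1/N and leaves a polynomial of
  degree 2N + j in \<xi> after multiplication by g_j; choosing N = (l - j) div 2 gives C = 4.
\<close>

text \<open>Inductive counterpart of homog_poly, better suited to induction.\<close>

inductive homogeneous :: "nat \<Rightarrow> (real^'n \<Rightarrow> real) \<Rightarrow> bool" where
  homogeneous_const: "homogeneous 0 (\<lambda>x. c)"
| homogeneous_coord_mult: "homogeneous j P \<Longrightarrow> homogeneous (Suc j) (\<lambda>x. x$i * P x)"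
| homogeneous_add: "homogeneous j P \<Longrightarrow> homogeneous j Q \<Longrightarrow> homogeneous j (\<lambda>x. P x + Q x)"

lemma homogeneous_cong:
  "homogeneous j P \<Longrightarrow> (\<And>x. P x = Q x) \<Longrightarrow> homogeneous j Q"
  using ext[of P Q] by simp

lemma homogeneous_zero: "homogeneous j (\<lambda>x. 0)"
proof (induction j)
  case 0 show ?case using homogeneous_const[of 0] .
next
  case (Suc j) from homogeneous_coord_mult[OF Suc, of undefined] show ?case by simp
qed

lemma homogeneous_cmult: "homogeneous j P \<Longrightarrow> homogeneous j (\<lambda>x. c * P x)"
proof (induction rule: homogeneous.induct)
  case (homogeneous_const d) show ?case using homogeneous.homogeneous_const[of "c*d"] .
next
  case (homogeneous_coord_mult j P i)
  from homogeneous.homogeneous_coord_mult[OF homogeneous_coord_mult.IH, of i] show ?case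
    by (rule homogeneous_cong) (simp add: algebra_simps)
next
  case (homogeneous_add j P Q)
  from homogeneous.homogeneous_add[OF homogeneous_add.IH] show ?case
    by (rule homogeneous_cong) (simp add: algebra_simps)
qed

lemma homogeneous_mult:
  "homogeneous a P \<Longrightarrow> homogeneous b Q \<Longrightarrow> homogeneous (a + b) (\<lambda>x. P x * Q x)"
proof (induction arbitrary: Q rule: homogeneous.induct)
  case (homogeneous_const c) then show ?case using homogeneous_cmult by simp
next
  case (homogeneous_coord_mult j P i)
  then have "homogeneous (Suc (j + b)) (\<lambda>x. x$i * (P x * Q x))"
    by (intro homogeneous.homogeneous_coord_mult) simp
  then have "homogeneous (Suc j + b) (\<lambda>x. x$i * (P x * Q x))" by simp
  then show ?case by (rule homogeneous_cong) (simp add: algebra_simps)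
next
  case (homogeneous_add j P1 P2)
  from homogeneous.homogeneous_add[OF homogeneous_add.IH[OF homogeneous_add.prems]]
  show ?case by (rule homogeneous_cong) (simp add: algebra_simps)
qed

lemma homogeneous_sum:
  assumes "\<And>a. a \<in> A \<Longrightarrow> homogeneous j (F a)"
  shows "homogeneous j (\<lambda>x. \<Sum>a\<in>A. F a x)"
proof (cases "finite A")
  case True
  then show ?thesis using assms
  proof (induction A rule: finite_induct)
    case empty then show ?case by (simp add: homogeneous_zero)
  next
    case (insert a A)
    from homogeneous_add[OF insert.prems[of a] insert.IH] insert show ?case
      by (rule_tac homogeneous_cong) auto
  qed
qed (simp add: homogeneous_zero)

lemma homogeneous_prod:
  assumes "\<And>a. a \<in> A \<Longrightarrow> homogeneous (\<alpha> a) (F a)"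
  shows "homogeneous (\<Sum>a\<in>A. \<alpha> a) (\<lambda>x. \<Prod>a\<in>A. F a x)"
proof (cases "finite A")
  case True
  then show ?thesis using assms
  proof (induction A rule: finite_induct)
    case empty then show ?case using homogeneous_const[of 1] by simp
  next
    case (insert a A)
    from homogeneous_mult[OF insert.prems[of a] insert.IH] insert show ?case
      by (rule_tac homogeneous_cong) auto
  qed
qed (simp add: homogeneous_const)

lemma homogeneous_coord: "homogeneous 1 (\<lambda>x. x$i)"
  using homogeneous_coord_mult[OF homogeneous_const[of 1], of i] by simp

lemma homogeneous_power: "homogeneous j P \<Longrightarrow> homogeneous (j*k) (\<lambda>x. P x ^ k)"
proof (induction k)
  case 0 then show ?case using homogeneous_const[of 1] by simp
next
  case (Suc k)
  from homogeneous_mult[OF Suc.prems Suc.IH[OF Suc.prems]] show ?case by (simp add: algebra_simps)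
qed

lemma homogeneous_inner: "homogeneous 1 (\<lambda>\<xi>::real^'n. x \<bullet> \<xi>)"
proof -
  have "homogeneous 1 (\<lambda>\<xi>::real^'n. \<Sum>i\<in>UNIV. x$i * \<xi>$i)"
    by (intro homogeneous_sum) (use homogeneous_cmult[OF homogeneous_coord] in auto)
  then show ?thesis by (rule homogeneous_cong) (simp add: inner_vec_def)
qed

lemma continuous_on_homogeneous: "homogeneous j P \<Longrightarrow> continuous_on S P"
proof (induction arbitrary: S rule: homogeneous.induct)
  case (homogeneous_const c) then show ?case by (rule continuous_on_const)
next
  case (homogeneous_coord_mult j P i) then show ?case by (intro continuous_intros) auto
next
  case (homogeneous_add j P Q) then show ?case by (intro continuous_intros) auto
qed

lemma homog_poly_imp_homogeneous:
  fixes P :: "real^'n \<Rightarrow> real" shows "homog_poly j P \<Longrightarrow> homogeneous j P"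
proof -
  assume "homog_poly j P"
  then obtain c :: "('n \<Rightarrow> nat) \<Rightarrow> real" where c:
    "\<forall>x::real^'n. P x = (\<Sum>\<alpha>\<in>{\<alpha>. (\<Sum>i\<in>UNIV. \<alpha> i) = j}. c \<alpha> * (\<Prod>i\<in>UNIV. (x $ i) ^ \<alpha> i))"
    unfolding homog_poly_def by blast
  have "homogeneous j (\<lambda>x. \<Sum>\<alpha>\<in>{\<alpha>. (\<Sum>i\<in>UNIV. \<alpha> i) = j}. c \<alpha> * (\<Prod>i\<in>UNIV. (x $ i) ^ \<alpha> i))"
  proof (rule homogeneous_sum)
    fix \<alpha> :: "'n \<Rightarrow> nat" assume "\<alpha> \<in> {\<alpha>. (\<Sum>i\<in>UNIV. \<alpha> i) = j}"
    then have s: "(\<Sum>i\<in>UNIV. \<alpha> i * 1) = j" by simp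
    have "homogeneous (\<Sum>i\<in>UNIV. 1 * \<alpha> i) (\<lambda>x. \<Prod>i\<in>UNIV. (x $ i) ^ \<alpha> i)"
      by (rule homogeneous_prod) (rule homogeneous_power[OF homogeneous_coord])
    with s show "homogeneous j (\<lambda>x. c \<alpha> * (\<Prod>i\<in>UNIV. (x $ i) ^ \<alpha> i))"
      by (intro homogeneous_cmult) (simp add: mult.commute)
  qed
  with c show ?thesis by (rule_tac homogeneous_cong) auto
qed

lemma finite_multiindices:
  "finite {\<alpha>::'n::finite \<Rightarrow> nat. (\<Sum>i\<in>UNIV. \<alpha> i) = j}"
proof (rule finite_subset)
  show "{\<alpha>::'n \<Rightarrow> nat. (\<Sum>i\<in>UNIV. \<alpha> i) = j} \<subseteq> Pi\<^sub>E UNIV (\<lambda>_. {..j})"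
  proof
    fix \<alpha> :: "'n \<Rightarrow> nat" assume "\<alpha> \<in> {\<alpha>. (\<Sum>i\<in>UNIV. \<alpha> i) = j}"
    then have "\<alpha> k \<le> j" for k using member_le_sum[of k UNIV \<alpha>] by auto
    then show "\<alpha> \<in> Pi\<^sub>E UNIV (\<lambda>_. {..j})" by (simp add: PiE_UNIV_domain)
  qed
  show "finite (Pi\<^sub>E (UNIV::'n set) (\<lambda>_. {..j}))" by (rule finite_PiE) auto
qed

lemma sum_fun_upd:
  "(\<Sum>k\<in>UNIV. (\<alpha>(i:=v)) k) + \<alpha> i = (\<Sum>k\<in>UNIV. (\<alpha>::'n::finite\<Rightarrow>nat) k) + v"
proof -
  have "(\<Sum>k\<in>UNIV. (\<alpha>(i:=v)) k) = v + (\<Sum>k\<in>UNIV-{i}. \<alpha> k)"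
    by (subst sum.remove[of _ i]) (auto intro!: sum.cong)
  moreover have "(\<Sum>k\<in>UNIV. \<alpha> k) = \<alpha> i + (\<Sum>k\<in>UNIV-{i}. \<alpha> k)"
    by (subst sum.remove[of _ i]) auto
  ultimately show ?thesis by simp
qed

lemma prod_power_fun_upd_Suc:
  "(\<Prod>k\<in>UNIV. (x::real^'n) $ k ^ (\<alpha>(i:=Suc (\<alpha> i))) k) = x$i * (\<Prod>k\<in>UNIV. x $ k ^ \<alpha> k)"
proof -
  have "(\<Prod>k\<in>UNIV. x $ k ^ (\<alpha>(i:=Suc (\<alpha> i))) k) = x$i ^ Suc (\<alpha> i) * (\<Prod>k\<in>UNIV-{i}. x $ k ^ \<alpha> k)"
    by (subst prod.remove[of _ i]) (auto intro!: prod.cong)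
  moreover have "(\<Prod>k\<in>UNIV. x $ k ^ \<alpha> k) = x$i ^ \<alpha> i * (\<Prod>k\<in>UNIV-{i}. x $ k ^ \<alpha> k)"
    by (subst prod.remove[of _ i]) auto
  ultimately show ?thesis by simp
qed

lemma homog_poly_const: "homog_poly 0 (\<lambda>x::real^'n. c)"
proof -
  have "{\<alpha>::'n\<Rightarrow>nat. (\<Sum>i\<in>UNIV. \<alpha> i) = 0} = {\<lambda>_. 0}"
  proof (intro set_eqI iffI)
    fix \<alpha> :: "'n \<Rightarrow> nat" assume "\<alpha> \<in> {\<alpha>. (\<Sum>i\<in>UNIV. \<alpha> i) = 0}"
    then have "\<forall>i\<in>UNIV. \<alpha> i = 0" using sum_eq_0_iff[of UNIV \<alpha>] by simp
    then show "\<alpha> \<in> {\<lambda>_. 0}" by (simp add: fun_eq_iff)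
  qed simp
  then show ?thesis unfolding homog_poly_def by (intro exI[of _ "\<lambda>_. c"]) simp
qed

lemma homog_poly_add:
  fixes P Q :: "real^'n \<Rightarrow> real"
  assumes "homog_poly j P" "homog_poly j Q" shows "homog_poly j (\<lambda>x. P x + Q x)"
proof -
  from assms obtain c d where
    c: "\<forall>x. P x = (\<Sum>\<alpha>\<in>{\<alpha>. (\<Sum>i\<in>UNIV. \<alpha> i) = j}. c \<alpha> * (\<Prod>i\<in>UNIV. (x $ i) ^ \<alpha> i))" and
    d: "\<forall>x. Q x = (\<Sum>\<alpha>\<in>{\<alpha>. (\<Sum>i\<in>UNIV. \<alpha> i) = j}. d \<alpha> * (\<Prod>i\<in>UNIV. (x $ i) ^ \<alpha> i))"
    unfolding homog_poly_def by blast
  show ?thesis unfolding homog_poly_def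
    by (intro exI[of _ "\<lambda>\<alpha>. c \<alpha> + d \<alpha>"]) (simp add: c d sum.distrib algebra_simps)
qed

lemma homog_poly_coord_mult:
  fixes P :: "real^'n \<Rightarrow> real"
  assumes "homog_poly j P" shows "homog_poly (Suc j) (\<lambda>x. x$i * P x)"
proof -
  from assms obtain c where c: "\<forall>x. P x = (\<Sum>\<alpha>\<in>{\<alpha>. (\<Sum>i\<in>UNIV. \<alpha> i) = j}. c \<alpha> * (\<Prod>i\<in>UNIV. (x $ i) ^ \<alpha> i))"
    unfolding homog_poly_def by blast
  define c' where "c' \<beta> = (if 0 < \<beta> i then c (\<beta>(i := \<beta> i - 1)) else 0)" for \<beta> :: "'n \<Rightarrow> nat"
  let ?S = "\<lambda>j. {\<alpha>::'n\<Rightarrow>nat. (\<Sum>i\<in>UNIV. \<alpha> i) = j}"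
  have "x$i * P x = (\<Sum>\<beta>\<in>?S (Suc j). c' \<beta> * (\<Prod>k\<in>UNIV. (x $ k) ^ \<beta> k))" for x
  proof -
    have "x$i * P x = (\<Sum>\<alpha>\<in>?S j. c \<alpha> * (x$i * (\<Prod>k\<in>UNIV. (x $ k) ^ \<alpha> k)))"
      by (simp add: c sum_distrib_left algebra_simps)
    also have "\<dots> = (\<Sum>\<beta>\<in>?S (Suc j) \<inter> {\<beta>. 0 < \<beta> i}. c' \<beta> * (\<Prod>k\<in>UNIV. (x $ k) ^ \<beta> k))"
    proof (rule sum.reindex_bij_witness[where i="\<lambda>\<beta>. \<beta>(i := \<beta> i - 1)" and j="\<lambda>\<alpha>. \<alpha>(i := Suc (\<alpha> i))"])
      fix \<alpha> assume a: "\<alpha> \<in> ?S j"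
      show "(\<alpha>(i := Suc (\<alpha> i)))(i := (\<alpha>(i := Suc (\<alpha> i))) i - 1) = \<alpha>"
        by auto
      show "\<alpha>(i := Suc (\<alpha> i)) \<in> ?S (Suc j) \<inter> {\<beta>. 0 < \<beta> i}"
        using a sum_fun_upd[of \<alpha> i "Suc (\<alpha> i)"] by auto
      show "c' (\<alpha>(i := Suc (\<alpha> i))) * (\<Prod>k\<in>UNIV. x $ k ^ (\<alpha>(i := Suc (\<alpha> i))) k) =
         c \<alpha> * (x $ i * (\<Prod>k\<in>UNIV. x $ k ^ \<alpha> k))"
        unfolding prod_power_fun_upd_Suc by (simp add: c'_def)
    next
      fix \<beta> assume b: "\<beta> \<in> ?S (Suc j) \<inter> {\<beta>. 0 < \<beta> i}"
      show "(\<beta>(i := \<beta> i - 1))(i := Suc ((\<beta>(i := \<beta> i - 1)) i)) = \<beta>" using b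
        by auto
      show "\<beta>(i := \<beta> i - 1) \<in> ?S j" using b sum_fun_upd[of \<beta> i "\<beta> i - 1"] by auto
    qed
    also have "\<dots> = (\<Sum>\<beta>\<in>?S (Suc j). c' \<beta> * (\<Prod>k\<in>UNIV. (x $ k) ^ \<beta> k))"
      by (rule sum.mono_neutral_left) (auto simp: finite_multiindices c'_def)
    finally show ?thesis .
  qed
  then show ?thesis unfolding homog_poly_def by blast
qed

lemma homogeneous_imp_homog_poly:
  fixes P :: "real^'n \<Rightarrow> real" shows "homogeneous j P \<Longrightarrow> homog_poly j P"
  by (induction rule: homogeneous.induct)
     (auto intro: homog_poly_const homog_poly_add homog_poly_coord_mult)

definition has_partial :: "'n::finite \<Rightarrow> (real^'n \<Rightarrow> real) \<Rightarrow> (real^'n \<Rightarrow> real) \<Rightarrow> bool" where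
  "has_partial i F DF \<longleftrightarrow> (\<forall>x. ((\<lambda>t. F (x + t *\<^sub>R axis i 1)) has_real_derivative DF x) (at 0))"

lemma has_partial_imp_partial_i: "has_partial i F DF \<Longrightarrow> partial_i i F = DF"
  unfolding has_partial_def partial_i_def by (auto intro!: ext DERIV_imp_deriv)

lemma has_partial_const: "has_partial i (\<lambda>x. c) (\<lambda>x. 0)"
  unfolding has_partial_def by auto

lemma has_partial_coord: "has_partial i (\<lambda>x. x$k) (\<lambda>x. if k = i then 1 else 0)"
  unfolding has_partial_def
proof
  fix x :: "real^'a"
  have "((\<lambda>t. x$k + t * (if k = i then 1 else 0)) has_real_derivative (if k = i then 1 else 0)) (at 0)"
    by (auto intro!: derivative_eq_intros)
  then show "((\<lambda>t. (x + t *\<^sub>R axis i 1) $ k) has_real_derivative (if k = i then 1 else 0)) (at 0)"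
    by (simp add: axis_def)
qed

lemma has_partial_add:
  "has_partial i F DF \<Longrightarrow> has_partial i G DG \<Longrightarrow> has_partial i (\<lambda>x. F x + G x) (\<lambda>x. DF x + DG x)"
  unfolding has_partial_def by (auto intro!: DERIV_add)

lemma has_partial_mult:
  assumes "has_partial i F DF" "has_partial i G DG"
  shows "has_partial i (\<lambda>x. F x * G x) (\<lambda>x. DF x * G x + F x * DG x)"
  using assms unfolding has_partial_def by (auto intro!: derivative_eq_intros)

lemma has_partial_cmult:
  "has_partial i F DF \<Longrightarrow> has_partial i (\<lambda>x. c * F x) (\<lambda>x. c * DF x)"
  using has_partial_mult[OF has_partial_const[of i c]] by simp

lemma has_partial_sum:
  "(\<And>a. a \<in> A \<Longrightarrow> has_partial i (F a) (DF a)) \<Longrightarrow> has_partial i (\<lambda>x. \<Sum>a\<in>A. F a x) (\<lambda>x. \<Sum>a\<in>A. DF a x)"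
  unfolding has_partial_def by (auto intro!: DERIV_sum)

lemma homogeneous_has_partial:
  "homogeneous j P \<Longrightarrow> \<exists>D. has_partial i P D \<and> homogeneous (j - 1) D \<and> (j = 0 \<longrightarrow> D = (\<lambda>x. 0))"
proof (induction rule: homogeneous.induct)
  case (homogeneous_const c) then show ?case using has_partial_const homogeneous_zero by blast
next
  case (homogeneous_add j P Q)
  then obtain D E where D: "has_partial i P D" "homogeneous (j - 1) D" "j = 0 \<longrightarrow> D = (\<lambda>x. 0)"
    and E: "has_partial i Q E" "homogeneous (j - 1) E" "j = 0 \<longrightarrow> E = (\<lambda>x. 0)" by blast
  show ?case
    using has_partial_add[OF D(1) E(1)] homogeneous.homogeneous_add[OF D(2) E(2)] D(3) E(3) by auto
next
  case (homogeneous_coord_mult j P k)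
  then obtain D where D: "has_partial i P D" "homogeneous (j - 1) D" "j = 0 \<longrightarrow> D = (\<lambda>x. 0)"
    by blast
  have L: "has_partial i (\<lambda>x. x $ k * P x) (\<lambda>x. (if k = i then 1 else 0) * P x + x $ k * D x)"
    by (rule has_partial_mult[OF has_partial_coord D(1)])
  have P: "homogeneous j (\<lambda>x. (if k = i then 1 else 0) * P x)"
    by (rule homogeneous_cmult[OF homogeneous_coord_mult.hyps])
  have "homogeneous j (\<lambda>x. (if k = i then 1 else 0) * P x + x $ k * D x)"
  proof (cases j)
    case 0
    then show ?thesis using D(3) P by simp
  next
    case (Suc j')
    with D(2) have "homogeneous j (\<lambda>x. x$k * D x)"
      using homogeneous.homogeneous_coord_mult by simp
    then show ?thesis by (rule homogeneous.homogeneous_add[OF P])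
  qed
  then show ?case using L by auto
qed

lemma homogeneous_has_partial_i: "homogeneous j P \<Longrightarrow> has_partial i P (partial_i i P)"
  using homogeneous_has_partial[of j P i] has_partial_imp_partial_i by metis

lemma homogeneous_partial_i: "homogeneous j P \<Longrightarrow> homogeneous (j - 1) (partial_i i P)"
  using homogeneous_has_partial[of j P i] has_partial_imp_partial_i by metis

lemma partial_i_homogeneous_0: "homogeneous 0 P \<Longrightarrow> partial_i i P = (\<lambda>x. 0)"
  using homogeneous_has_partial[of 0 P i] has_partial_imp_partial_i by metis

lemma partial_i_add:
  "homogeneous j P \<Longrightarrow> homogeneous j Q \<Longrightarrow> partial_i i (\<lambda>x. P x + Q x) = (\<lambda>x. partial_i i P x + partial_i i Q x)"
  by (rule has_partial_imp_partial_i, rule has_partial_add; rule homogeneous_has_partial_i)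

lemma homogeneous_laplacian: "homogeneous j P \<Longrightarrow> homogeneous (j - 2) (laplacian P)"
  unfolding laplacian_def[abs_def]
  by (rule homogeneous_sum) (metis homogeneous_partial_i diff_diff_left one_add_one)

lemma laplacian_homogeneous_lt2: "homogeneous j P \<Longrightarrow> j < 2 \<Longrightarrow> laplacian P x = 0"
proof -
  assume "homogeneous j P" "j < 2"
  then have j1: "j - 1 = 0" by simp
  have "homogeneous 0 (partial_i i P)" for i
    using homogeneous_partial_i[OF \<open>homogeneous j P\<close>, of i] unfolding j1 .
  then show ?thesis unfolding laplacian_def by (simp add: partial_i_homogeneous_0)
qed

lemma partial_i_linear_comb:
  assumes "homogeneous j P" "homogeneous j Q"
  shows "partial_i i (\<lambda>x. a * P x + b * Q x) = (\<lambda>x. a * partial_i i P x + b * partial_i i Q x)"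
  using assms by (intro has_partial_imp_partial_i has_partial_add has_partial_cmult homogeneous_has_partial_i)

lemma laplacian_linear_comb:
  assumes "homogeneous j P" "homogeneous j Q"
  shows "laplacian (\<lambda>x. a * P x + b * Q x) x = a * laplacian P x + b * laplacian Q x"
proof -
  have "partial_i i (partial_i i (\<lambda>x. a * P x + b * Q x)) =
     (\<lambda>x. a * partial_i i (partial_i i P) x + b * partial_i i (partial_i i Q) x)" for i
    unfolding partial_i_linear_comb[OF assms]
    by (rule partial_i_linear_comb; rule homogeneous_partial_i, fact assms)
  then show ?thesis unfolding laplacian_def by (simp add: sum.distrib sum_distrib_left)
qed

definition sqnorm :: "real^'n::finite \<Rightarrow> real" where "sqnorm x = (\<Sum>k\<in>UNIV. (x$k)^2)"

lemma homogeneous_sqnorm: "homogeneous 2 sqnorm"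
proof -
  have "homogeneous 2 (\<lambda>x::real^'a. \<Sum>k\<in>UNIV. (x$k)^2)"
  proof (rule homogeneous_sum)
    fix k show "homogeneous 2 (\<lambda>x::real^'a. (x$k)^2)"
      using homogeneous_power[OF homogeneous_coord[of k], of 2] by simp
  qed
  then show ?thesis unfolding sqnorm_def by (rule homogeneous_cong) simp
qed

lemma has_partial_sqnorm: "has_partial i sqnorm (\<lambda>x. 2 * x$i)"
proof -
  let ?\<delta> = "\<lambda>k. if k = i then 1 else 0 :: real"
  have "has_partial i (\<lambda>x. \<Sum>k\<in>UNIV. x$k * x$k) (\<lambda>x. \<Sum>k\<in>UNIV. ?\<delta> k * x$k + x$k * ?\<delta> k)"
    by (rule has_partial_sum, rule has_partial_mult; rule has_partial_coord)
  moreover have "(\<lambda>x::real^'a. \<Sum>k\<in>UNIV. ?\<delta> k * x$k + x$k * ?\<delta> k) = (\<lambda>x. 2 * x$i)"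
    by (auto simp: if_distrib cong: if_cong)
  moreover have "(\<lambda>x::real^'a. \<Sum>k\<in>UNIV. x$k * x$k) = sqnorm"
    by (auto simp: sqnorm_def power2_eq_square)
  ultimately show ?thesis by simp
qed

lemma euler_homogeneous:
  fixes Q :: "real^'n \<Rightarrow> real"
  shows "homogeneous m Q \<Longrightarrow> (\<Sum>i\<in>UNIV. x$i * partial_i i Q x) = m * Q x"
proof (induction arbitrary: x rule: homogeneous.induct)
  case (homogeneous_const c)
  have "partial_i i (\<lambda>x::real^'n. c) = (\<lambda>x. 0)" for i
    by (rule partial_i_homogeneous_0, rule homogeneous.homogeneous_const)
  then show ?case by simp
next
  case (homogeneous_add j P Q)
  then show ?case by (simp add: partial_i_add sum.distrib algebra_simps)
next
  case (homogeneous_coord_mult j P k)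
  have "partial_i i (\<lambda>x. x $ k * P x) =
      (\<lambda>x. (if k = i then 1 else 0) * P x + x $ k * partial_i i P x)" for i
    by (intro has_partial_imp_partial_i has_partial_mult has_partial_coord
        homogeneous_has_partial_i[OF homogeneous_coord_mult.hyps])
  then have "(\<Sum>i\<in>UNIV. x$i * partial_i i (\<lambda>x. x $ k * P x) x) =
     (\<Sum>i\<in>UNIV. (if k = i then x$i * P x else 0) + x$k * (x$i * partial_i i P x))"
    by (intro sum.cong) (auto simp: algebra_simps)
  also have "\<dots> = (\<Sum>i\<in>UNIV. (if k = i then x$i * P x else 0))
      + x$k * (\<Sum>i\<in>UNIV. x$i * partial_i i P x)"
    by (simp add: sum.distrib sum_distrib_left)
  also have "\<dots> = x$k * P x + x$k * (j * P x)" using homogeneous_coord_mult.IH by simp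
  finally show ?case by (simp add: algebra_simps)
qed

lemma laplacian_sqnorm_mult:
  fixes Q :: "real^'n \<Rightarrow> real" assumes "homogeneous m Q"
  shows "laplacian (\<lambda>x. sqnorm x * Q x) x = (2 * CARD('n) + 4 * m) * Q x + sqnorm x * laplacian Q x"
proof -
  have P1: "partial_i i (\<lambda>x. sqnorm x * Q x) = (\<lambda>x. 2 * x$i * Q x + sqnorm x * partial_i i Q x)" for i
    by (rule has_partial_imp_partial_i)
       (use has_partial_mult[OF has_partial_sqnorm homogeneous_has_partial_i[OF assms]] in simp)
  have "has_partial i (\<lambda>x. 2 * x$i * Q x + sqnorm x * partial_i i Q x)
     (\<lambda>x. ((2 * (if i = i then 1 else 0)) * Q x + 2 * x$i * partial_i i Q x) +
          (2 * x$i * partial_i i Q x + sqnorm x * partial_i i (partial_i i Q) x))" for i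
    by (intro has_partial_add has_partial_mult has_partial_cmult has_partial_coord has_partial_sqnorm
        homogeneous_has_partial_i[OF assms] homogeneous_has_partial_i[OF homogeneous_partial_i[OF assms]])
  then have P2: "partial_i i (partial_i i (\<lambda>x. sqnorm x * Q x)) =
     (\<lambda>x. 2 * Q x + 4 * (x$i * partial_i i Q x) + sqnorm x * partial_i i (partial_i i Q) x)" for i
    unfolding P1 by (subst has_partial_imp_partial_i) (auto simp: algebra_simps)
  have E: "(\<Sum>i\<in>UNIV. x$i * partial_i i Q x) = m * Q x" by (rule euler_homogeneous[OF assms])
  have "laplacian (\<lambda>x. sqnorm x * Q x) x =
      (\<Sum>i\<in>(UNIV::'n set). 2*Q x) + 4*(\<Sum>i\<in>UNIV. x$i * partial_i i Q x)
      + sqnorm x * (\<Sum>i\<in>UNIV. partial_i i (partial_i i Q) x)"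
    unfolding laplacian_def P2 by (simp add: sum.distrib sum_distrib_left)
  then show ?thesis unfolding E by (simp add: laplacian_def algebra_simps)
qed

lemma homogeneous_sqnorm_mult:
  assumes "homogeneous (m - 2) Q" "2 \<le> m" shows "homogeneous m (\<lambda>x. sqnorm x * Q x)"
  using homogeneous_mult[OF homogeneous_sqnorm assms(1)] assms(2) by (simp only: le_add_diff_inverse)

text \<open>Since \<Delta>(|x|^2 Q) = (2d + 4m) Q + |x|^2 \<Delta>Q, the equation reduces to the same
  equation for \<Delta>R in degree m - 2, with a larger constant.\<close>
lemma sqnorm_laplacian_equation_solvable:
  fixes R :: "real^'n \<Rightarrow> real"
  shows "homogeneous m R \<Longrightarrow> 0 \<le> c \<Longrightarrow>
    \<exists>Q. homogeneous m Q \<and> (\<forall>x. laplacian (\<lambda>x. sqnorm x * Q x) x + c * Q x = R x)"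
proof (induction m arbitrary: c R rule: less_induct)
  case (less m)
  define cm where "cm = 2 * real CARD('n) + 4 * real m + c"
  have cm: "cm > 0" using less.prems(2) unfolding cm_def by (simp add: add_pos_nonneg)
  show ?case
  proof (cases "m < 2")
    case True
    define Q where "Q x = (1/cm) * R x" for x
    have hQ: "homogeneous m Q" unfolding Q_def by (rule homogeneous_cmult) (fact less.prems(1))
    have "laplacian (\<lambda>x. sqnorm x * Q x) x + c * Q x = cm * Q x" for x
      using laplacian_sqnorm_mult[OF hQ, of x] laplacian_homogeneous_lt2[OF hQ True, of x]
      by (simp add: cm_def algebra_simps)
    then show ?thesis using hQ cm by (auto simp: Q_def)
  next
    case False
    obtain Q' where Q': "homogeneous (m-2) Q'"
      "\<forall>x. laplacian (\<lambda>x. sqnorm x * Q' x) x + cm * Q' x = laplacian R x"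
      using less.IH[of "m-2" "laplacian R" cm] homogeneous_laplacian[OF less.prems(1)] False cm by auto
    have hrQ': "homogeneous m (\<lambda>x. sqnorm x * Q' x)"
      using homogeneous_sqnorm_mult[OF Q'(1)] False by simp
    define Q where "Q x = (1/cm) * R x + (-1/cm) * (sqnorm x * Q' x)" for x
    have hQ: "homogeneous m Q" unfolding Q_def by (intro homogeneous_add homogeneous_cmult less.prems(1) hrQ')
    have LQ: "laplacian Q x = Q' x" for x
    proof -
      have "laplacian Q x = (1/cm) * laplacian R x + (-1/cm) * laplacian (\<lambda>x. sqnorm x * Q' x) x"
        unfolding Q_def by (rule laplacian_linear_comb[OF less.prems(1) hrQ'])
      also have "\<dots> = Q' x" using Q'(2)[rule_format, of x] cm by (simp add: field_simps)
      finally show ?thesis .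
    qed
    have "laplacian (\<lambda>x. sqnorm x * Q x) x + c * Q x = cm * Q x + sqnorm x * Q' x" for x
      using laplacian_sqnorm_mult[OF hQ, of x] LQ[of x] by (simp add: cm_def algebra_simps)
    then show ?thesis using hQ cm by (auto simp: Q_def algebra_simps)
  qed
qed

lemma fischer_decomposition:
  fixes P :: "real^'n \<Rightarrow> real" assumes "homogeneous N P" "2 \<le> N"
  obtains H Q where "homogeneous N H" "\<forall>x. laplacian H x = 0" "homogeneous (N-2) Q"
    "\<forall>x. P x = H x + sqnorm x * Q x"
proof -
  obtain Q where Q: "homogeneous (N-2) Q" "\<forall>x. laplacian (\<lambda>x. sqnorm x * Q x) x = laplacian P x"
    using sqnorm_laplacian_equation_solvable[OF homogeneous_laplacian[OF assms(1)], of 0] by auto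
  have hrQ: "homogeneous N (\<lambda>x. sqnorm x * Q x)" by (rule homogeneous_sqnorm_mult[OF Q(1) assms(2)])
  define H where "H x = 1 * P x + (-1) * (sqnorm x * Q x)" for x
  have "homogeneous N H" unfolding H_def by (intro homogeneous_add homogeneous_cmult assms(1) hrQ)
  moreover have "laplacian H x = 0" for x
    unfolding H_def laplacian_linear_comb[OF assms(1) hrQ] using Q(2) by simp
  moreover have "P x = H x + sqnorm x * Q x" for x by (simp add: H_def)
  ultimately show ?thesis using Q(1) that by blast
qed

lemma sqnorm_unit_sph: "x \<in> unit_sph \<Longrightarrow> sqnorm x = 1"
proof -
  assume "x \<in> unit_sph"
  then have "norm x = 1" by (simp add: unit_sph_def)
  then have "x \<bullet> x = 1" by (metis power2_norm_eq_inner one_power2)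
  then show ?thesis by (simp add: sqnorm_def inner_vec_def power2_eq_square)
qed

lemma homogeneous_harmonic_in_sph_harm:
  "homogeneous N H \<Longrightarrow> (\<forall>x. laplacian H x = 0) \<Longrightarrow> (\<forall>\<xi>\<in>unit_sph. g \<xi> = H \<xi>) \<Longrightarrow> g \<in> sph_harm N"
  unfolding sph_harm_def using homogeneous_imp_homog_poly by blast

lemma sph_harmE:
  fixes g :: "real^'n \<Rightarrow> real" assumes "g \<in> sph_harm N"
  obtains H where "homogeneous N H" "\<forall>x. laplacian H x = 0" "\<forall>\<xi>\<in>unit_sph. g \<xi> = H \<xi>"
proof -
  from assms obtain P where "homog_poly N P" "\<forall>x. laplacian P x = 0" "\<forall>\<xi>\<in>unit_sph. g \<xi> = P \<xi>"
    unfolding sph_harm_def by blast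
  then show ?thesis by (intro that homog_poly_imp_homogeneous)
qed

lemma sph_harm_zero: "(\<lambda>_. 0) \<in> sph_harm N"
  by (rule homogeneous_harmonic_in_sph_harm[OF homogeneous_zero])
     (use laplacian_homogeneous_lt2[OF homogeneous_zero[of 0]] in auto)

lemma sph_harm_add:
  fixes g :: "real^'n \<Rightarrow> real"
  assumes "g \<in> sph_harm N" "h \<in> sph_harm N" shows "(\<lambda>\<xi>. g \<xi> + h \<xi>) \<in> sph_harm N"
proof -
  obtain G where G: "homogeneous N G" "\<forall>x. laplacian G x = 0" "\<forall>\<xi>\<in>unit_sph. g \<xi> = G \<xi>"
    by (rule sph_harmE[OF assms(1)])
  obtain H where H: "homogeneous N H" "\<forall>x. laplacian H x = 0" "\<forall>\<xi>\<in>unit_sph. h \<xi> = H \<xi>"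
    by (rule sph_harmE[OF assms(2)])
  show ?thesis
  proof (rule homogeneous_harmonic_in_sph_harm)
    show "homogeneous N (\<lambda>x. G x + H x)" by (intro homogeneous_add G(1) H(1))
    show "\<forall>x. laplacian (\<lambda>x. G x + H x) x = 0"
      using laplacian_linear_comb[OF G(1) H(1), of 1 1] G(2) H(2) by simp
    show "\<forall>\<xi>\<in>unit_sph. g \<xi> + h \<xi> = G \<xi> + H \<xi>" using G(3) H(3) by simp
  qed
qed

lemma Pi_sph_zero: "(\<lambda>_. 0) \<in> Pi_sph l"
  unfolding Pi_sph_def by (rule CollectI, rule exI[of _ "\<lambda>_ _. 0"]) (simp add: sph_harm_zero)

lemma Pi_sph_cong:
  "F \<in> Pi_sph l \<Longrightarrow> (\<forall>\<xi>\<in>unit_sph. F \<xi> = G \<xi>) \<Longrightarrow> G \<in> Pi_sph l"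
  unfolding Pi_sph_def by auto

lemma Pi_sph_add:
  fixes F :: "real^'n \<Rightarrow> real"
  assumes "F \<in> Pi_sph l" "G \<in> Pi_sph l" shows "(\<lambda>\<xi>. F \<xi> + G \<xi>) \<in> Pi_sph l"
proof -
  from assms obtain f g where f: "\<forall>i\<le>l. f i \<in> sph_harm i" "\<forall>\<xi>\<in>unit_sph. F \<xi> = (\<Sum>i\<le>l. f i \<xi>)"
    and g: "\<forall>i\<le>l. g i \<in> sph_harm i" "\<forall>\<xi>\<in>unit_sph. G \<xi> = (\<Sum>i\<le>l. g i \<xi>)"
    unfolding Pi_sph_def by blast
  show ?thesis unfolding Pi_sph_def
    by (rule CollectI, rule exI[of _ "\<lambda>i \<xi>. f i \<xi> + g i \<xi>"]) (simp add: f g sph_harm_add sum.distrib)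
qed

lemma sph_harm_in_Pi_sph:
  fixes h :: "real^'n \<Rightarrow> real"
  assumes "h \<in> sph_harm N" "N \<le> l" shows "h \<in> Pi_sph l"
proof -
  have "(\<Sum>i\<le>l. (if i = N then h else (\<lambda>_. 0)) \<xi>) = h \<xi>" for \<xi>
  proof -
    have "(\<Sum>i\<le>l. (if i = N then h else (\<lambda>_. 0)) \<xi>) = (\<Sum>i\<le>l. (if i = N then h \<xi> else 0))"
      by (rule sum.cong) auto
    then show ?thesis using assms(2) by simp
  qed
  then show ?thesis unfolding Pi_sph_def
    by (intro CollectI exI[of _ "\<lambda>i. if i = N then h else (\<lambda>_. 0)"])
       (auto simp: assms sph_harm_zero)
qed

lemma Pi_sph_sum:
  fixes F :: "'a \<Rightarrow> real^'n \<Rightarrow> real"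
  assumes "\<And>a. a \<in> A \<Longrightarrow> F a \<in> Pi_sph l"
  shows "(\<lambda>\<xi>. \<Sum>a\<in>A. F a \<xi>) \<in> Pi_sph l"
proof (cases "finite A")
  case True
  then show ?thesis using assms
  proof (induction A rule: finite_induct)
    case empty then show ?case using Pi_sph_zero by simp
  next
    case (insert a A)
    from Pi_sph_add[OF insert.prems[of a] insert.IH] insert show ?case by simp
  qed
qed (simp add: Pi_sph_zero)

lemma homogeneous_in_Pi_sph:
  fixes P :: "real^'n \<Rightarrow> real"
  shows "homogeneous N P \<Longrightarrow> N \<le> l \<Longrightarrow> P \<in> Pi_sph l"
proof (induction N arbitrary: P rule: less_induct)
  case (less N)
  show ?case
  proof (cases "N < 2")
    case True
    have "P \<in> sph_harm N"
      by (rule homogeneous_harmonic_in_sph_harm[OF less.prems(1)])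
         (auto simp: laplacian_homogeneous_lt2[OF less.prems(1) True])
    then show ?thesis using sph_harm_in_Pi_sph less.prems(2) by blast
  next
    case False
    obtain H Q where HQ: "homogeneous N H" "\<forall>x. laplacian H x = 0" "homogeneous (N-2) Q"
      "\<forall>x. P x = H x + sqnorm x * Q x"
      using fischer_decomposition[OF less.prems(1)] False by auto
    have "H \<in> Pi_sph l"
      using sph_harm_in_Pi_sph[OF homogeneous_harmonic_in_sph_harm[OF HQ(1) HQ(2)] less.prems(2)] by simp
    moreover have "Q \<in> Pi_sph l" using less.IH[OF _ HQ(3)] False less.prems(2) by simp
    ultimately have "(\<lambda>\<xi>. H \<xi> + Q \<xi>) \<in> Pi_sph l" by (rule Pi_sph_add)
    then show ?thesis by (rule Pi_sph_cong) (simp add: HQ(4) sqnorm_unit_sph)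
  qed
qed

definition poly_deg_le :: "nat \<Rightarrow> (real^'n::finite \<Rightarrow> real) \<Rightarrow> bool" where
  "poly_deg_le N F \<longleftrightarrow> (\<exists>G. (\<forall>i\<le>N. homogeneous i (G i)) \<and> (\<forall>x. F x = (\<Sum>i\<le>N. G i x)))"

lemma poly_deg_le_in_Pi_sph: "poly_deg_le N F \<Longrightarrow> N \<le> l \<Longrightarrow> F \<in> Pi_sph l"
proof -
  assume "poly_deg_le N F" "N \<le> l"
  then obtain G where G: "\<forall>i\<le>N. homogeneous i (G i)" "\<forall>x. F x = (\<Sum>i\<le>N. G i x)"
    unfolding poly_deg_le_def
    by blast
  have "(\<lambda>\<xi>. \<Sum>i\<le>N. G i \<xi>) \<in> Pi_sph l"
  proof (rule Pi_sph_sum)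
    fix i assume "i \<in> {..N}"
    then show "G i \<in> Pi_sph l" using G(1) \<open>N \<le> l\<close>
      by (intro homogeneous_in_Pi_sph[of i]) auto
  qed
  then show ?thesis by (rule Pi_sph_cong) (simp add: G(2))
qed

lemma homogeneous_imp_poly_deg_le:
  assumes "homogeneous i F" "i \<le> N" shows "poly_deg_le N F"
proof -
  have "(\<Sum>k\<le>N. (if k = i then F else (\<lambda>_. 0)) x) = F x" for x
  proof -
    have "(\<Sum>k\<le>N. (if k = i then F else (\<lambda>_. 0)) x) = (\<Sum>k\<le>N. (if k = i then F x else 0))"
      by (rule sum.cong) auto
    then show ?thesis using assms(2) by simp
  qed
  then show ?thesis unfolding poly_deg_le_def
    by (intro exI[of _ "\<lambda>k. if k = i then F else (\<lambda>_. 0)"]) (auto simp: assms homogeneous_zero)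
qed

lemma poly_deg_le_add:
  assumes "poly_deg_le N F" "poly_deg_le N G" shows "poly_deg_le N (\<lambda>x. F x + G x)"
proof -
  from assms obtain f g where f: "\<forall>i\<le>N. homogeneous i (f i)" "\<forall>x. F x = (\<Sum>i\<le>N. f i x)"
    and g: "\<forall>i\<le>N. homogeneous i (g i)" "\<forall>x. G x = (\<Sum>i\<le>N. g i x)"
      unfolding poly_deg_le_def
      by blast
  show ?thesis unfolding poly_deg_le_def
    by (rule exI[of _ "\<lambda>i x. f i x + g i x"]) (simp add: f g homogeneous_add sum.distrib)
qed

lemma poly_deg_le_cmult:
  assumes "poly_deg_le N F" shows "poly_deg_le N (\<lambda>x. c * F x)"
proof -
  from assms obtain f where f: "\<forall>i\<le>N. homogeneous i (f i)" "\<forall>x. F x = (\<Sum>i\<le>N. f i x)"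
    unfolding poly_deg_le_def by blast
  show ?thesis unfolding poly_deg_le_def
    by (rule exI[of _ "\<lambda>i x. c * f i x"]) (simp add: f homogeneous_cmult sum_distrib_left)
qed

lemma poly_deg_le_zero: "poly_deg_le N (\<lambda>x. 0)"
  using homogeneous_imp_poly_deg_le[OF homogeneous_zero[of 0]] by simp

lemma poly_deg_le_sum:
  assumes "\<And>a. a \<in> A \<Longrightarrow> poly_deg_le N (F a)"
  shows "poly_deg_le N (\<lambda>x. \<Sum>a\<in>A. F a x)"
proof (cases "finite A")
  case True
  then show ?thesis using assms
  proof (induction A rule: finite_induct)
    case empty then show ?case using poly_deg_le_zero by simp
  next
    case (insert a A)
    from poly_deg_le_add[OF insert.prems[of a] insert.IH] insert show ?case by simp
  qed
qed (simp add: poly_deg_le_zero)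

lemma poly_deg_le_mono:
  assumes "poly_deg_le N F" "N \<le> M" shows "poly_deg_le M F"
proof -
  from assms obtain f where f: "\<forall>i\<le>N. homogeneous i (f i)" "\<forall>x. F x = (\<Sum>i\<le>N. f i x)"
    unfolding poly_deg_le_def by blast
  have "poly_deg_le M (\<lambda>x. \<Sum>i\<le>N. f i x)"
  proof (rule poly_deg_le_sum)
    fix i assume "i \<in> {..N}"
    then show "poly_deg_le M (f i)" using f(1) assms(2) by (intro homogeneous_imp_poly_deg_le[of i]) auto
  qed
  then show ?thesis using f(2) by (simp add: poly_deg_le_def)
qed

lemma poly_deg_le_mult:
  assumes "homogeneous a L" "poly_deg_le N F" shows "poly_deg_le (N + a) (\<lambda>x. L x * F x)"
proof -
  from assms obtain f where f: "\<forall>i\<le>N. homogeneous i (f i)" "\<forall>x. F x = (\<Sum>i\<le>N. f i x)"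
    unfolding poly_deg_le_def by blast
  have "poly_deg_le (N + a) (\<lambda>x. \<Sum>i\<le>N. L x * f i x)"
  proof (rule poly_deg_le_sum)
    fix i assume "i \<in> {..N}"
    then show "poly_deg_le (N + a) (\<lambda>x. L x * f i x)"
      using homogeneous_mult[OF assms(1), of i "f i"] f(1)
      by (intro homogeneous_imp_poly_deg_le) auto
  qed
  then show ?thesis using f(2) by (simp add: poly_deg_le_def sum_distrib_left)
qed

lemma poly_deg_le_cong: "poly_deg_le N F \<Longrightarrow> (\<And>x. F x = G x) \<Longrightarrow> poly_deg_le N G"
  using ext[of F G] by simp

fun chebyshev :: "nat \<Rightarrow> real \<Rightarrow> real" where
  "chebyshev 0 t = 1"
| "chebyshev (Suc 0) t = t"
| "chebyshev (Suc (Suc n)) t = 2 * t * chebyshev (Suc n) t - chebyshev n t"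

lemma chebyshev_cos: "chebyshev n (cos \<theta>) = cos (real n * \<theta>)"
proof (induction n rule: induct_nat_012)
  case (ge2 n)
  have "real (Suc (Suc n)) * \<theta> = real (Suc n) * \<theta> + \<theta>" "real n * \<theta> = real (Suc n) * \<theta> - \<theta>"
    by (simp_all add: algebra_simps)
  then have "cos (real (Suc (Suc n)) * \<theta>) = 2 * cos \<theta> * cos (real (Suc n) * \<theta>) - cos (real n * \<theta>)"
    by (simp add: cos_add cos_diff)
  then show ?case using ge2 by simp
qed simp_all

lemma poly_deg_le_chebyshev_mult:
  fixes P :: "real^'n \<Rightarrow> real" assumes P: "homogeneous j P"
  shows "poly_deg_le (n + j) (\<lambda>\<xi>. chebyshev n (x \<bullet> \<xi>) * P \<xi>)"
proof (induction n rule: induct_nat_012)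
  case 0
  show ?case using homogeneous_imp_poly_deg_le[OF P] by simp
next
  case 1
  show ?case using poly_deg_le_mult[OF homogeneous_inner homogeneous_imp_poly_deg_le[OF P order_refl]]
    by simp
next
  case (ge2 n)
  have "poly_deg_le (Suc n + j + 1)
      (\<lambda>\<xi>. 2 * ((x \<bullet> \<xi>) * (chebyshev (Suc n) (x \<bullet> \<xi>) * P \<xi>)) + (-1) * (chebyshev n (x \<bullet> \<xi>) * P \<xi>))"
    by (intro poly_deg_le_add poly_deg_le_cmult poly_deg_le_mult[OF homogeneous_inner ge2(2)]
        poly_deg_le_mono[OF ge2(1)]) simp
  then have "poly_deg_le (Suc (Suc n) + j)
      (\<lambda>\<xi>. 2 * ((x \<bullet> \<xi>) * (chebyshev (Suc n) (x \<bullet> \<xi>) * P \<xi>)) + (-1) * (chebyshev n (x \<bullet> \<xi>) * P \<xi>))"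
    by simp
  then show ?case by (rule poly_deg_le_cong) (simp add: algebra_simps)
qed

text \<open>
  The goal is odd_cos_series 1 \<theta> = (\<pi>/4)(\<pi>/2 - \<theta>) on [0, \<pi>]. The termwise derivative
  series does not converge uniformly at r = 1, so we differentiate for r < 1, where the sine series
  equals (Arg (1 + r e^{i\<theta>}) - Arg (1 - r e^{i\<theta>}))/2, and let r tend to 1 (Abel summation).
\<close>

definition odd_cos_series :: "real \<Rightarrow> real \<Rightarrow> real" where
  "odd_cos_series r \<theta> = (\<Sum>n. r^(2*n+1) * cos ((2 * real n + 1) * \<theta>) / (2 * real n + 1)^2)"

definition odd_sin_series :: "real \<Rightarrow> real \<Rightarrow> real" where
  "odd_sin_series r \<theta> = (\<Sum>n. r^(2*n+1) * sin ((2 * real n + 1) * \<theta>) / (2 * real n + 1))"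

lemma summable_inverse_odd_squares: "summable (\<lambda>n. 1 / (2 * real n + 1)^2)"
proof (rule summable_comparison_test)
  show "summable (\<lambda>n. inverse (real n ^ 2))" by (rule inverse_power_summable) simp
  have "norm (1 / (2 * real n + 1)^2) \<le> inverse (real n ^ 2)" if "n \<ge> 1" for n
  proof -
    have "(real n)^2 \<le> (2*real n+1)^2" by (rule power_mono) auto
    then have "1 / (2 * real n + 1)^2 \<le> 1 / (real n)^2"
      by (rule divide_left_mono) (use that in auto)
    then show ?thesis by (simp add: inverse_eq_divide)
  qed
  then show "\<exists>N. \<forall>n\<ge>N. norm (1 / (2 * real n + 1)^2) \<le> inverse (real n ^ 2)" by blast
qed

lemma odd_cos_term_bound:
  fixes c r :: real and n :: nat
  assumes "\<bar>c\<bar> \<le> 1" "0 \<le> r" "r \<le> 1"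
  shows "\<bar>r^(2*n+1) * c / (2 * real n + 1)^2\<bar> \<le> 1 / (2 * real n + 1)^2"
proof -
  have "\<bar>r^(2*n+1) * c\<bar> \<le> 1" using assms by (simp add: abs_mult mult_le_one power_le_one)
  then show ?thesis by (simp add: abs_mult divide_right_mono)
qed

lemma odd_sin_term_bound:
  assumes r: "0 \<le> r" "r \<le> 1"
  shows "\<bar>r^(2*n+1) * sin ((2 * real n + 1) * t) / (2 * real n + 1)\<bar> \<le> r^n"
proof -
  have "\<bar>r^(2*n+1) * sin ((2 * real n + 1) * t)\<bar> \<le> r^(2*n+1)"
    using r by (simp add: abs_mult mult_left_le)
  also have "\<dots> \<le> r^n" using r by (intro power_decreasing) auto
  finally have "\<bar>r^(2*n+1) * sin ((2 * real n + 1) * t)\<bar> \<le> r^n" .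
  moreover have "\<bar>r^(2*n+1) * sin ((2 * real n + 1) * t)\<bar> / (2 * real n + 1)
      \<le> \<bar>r^(2*n+1) * sin ((2 * real n + 1) * t)\<bar> / 1"
    by (rule divide_left_mono) auto
  ultimately show ?thesis by (simp add: abs_divide)
qed

lemma odd_cos_series_deriv:
  assumes r: "0 \<le> r" "r < 1"
  shows "((\<lambda>\<theta>. odd_cos_series r \<theta>) has_real_derivative - odd_sin_series r \<theta>) (at \<theta>)"
proof -
  define f where "f n t = (r^(2*n+1) / (2 * real n + 1)^2) * cos ((2 * real n + 1) * t)" for n t
  define f' where "f' n t = - (r^(2*n+1) * sin ((2 * real n + 1) * t) / (2 * real n + 1))" for n t
  have d_cos: "((\<lambda>t. c * cos (k * t)) has_real_derivative c * (- sin (k*t) * k)) (at t)"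
    for c k t :: real
    by (auto intro!: derivative_eq_intros)
  have d: "(f n has_field_derivative f' n t) (at t within UNIV)" for n t
  proof -
    let ?k = "2 * real n + 1"
    have "(f n has_field_derivative (r^(2*n+1) / ?k^2) * (- sin (?k * t) * ?k)) (at t)"
      unfolding f_def by (rule d_cos)
    moreover have "(r^(2*n+1) / ?k^2) * (- sin (?k * t) * ?k) = f' n t"
      unfolding f'_def by (simp add: power2_eq_square add_pos_nonneg)
    ultimately show ?thesis by simp
  qed
  have u: "uniformly_convergent_on UNIV (\<lambda>N t. \<Sum>i<N. f' i t)"
  proof (rule Weierstrass_m_test')
    show "summable (\<lambda>n. r^n)" using r by (intro summable_geometric) simp
    show "norm (f' n t) \<le> r^n" for n t
      using odd_sin_term_bound[OF r(1) less_imp_le[OF r(2)], of n t] by (simp add: f'_def)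
  qed
  have s: "summable (\<lambda>n. f n 0)"
  proof (rule summable_comparison_test[OF _ summable_inverse_odd_squares])
    show "\<exists>N. \<forall>n\<ge>N. norm (f n 0) \<le> 1 / (2 * real n + 1)^2"
      using odd_cos_term_bound[of 1 r] r unfolding f_def by auto
  qed
  from has_field_derivative_series'(2)[OF convex_UNIV d u _ s] 
  have "((\<lambda>x. \<Sum>n. f n x) has_field_derivative (\<Sum>n. f' n \<theta>)) (at \<theta>)" by simp
  moreover have "(\<lambda>x. \<Sum>n. f n x) = (\<lambda>\<theta>. odd_cos_series r \<theta>)"
    by (simp add: f_def odd_cos_series_def fun_eq_iff mult.commute)
  moreover have "(\<Sum>n. f' n \<theta>) = - odd_sin_series r \<theta>"
  proof -
    have "summable (\<lambda>n. r^(2*n+1) * sin ((2 * real n + 1) * \<theta>) / (2 * real n + 1))"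
    proof (rule summable_comparison_test)
      show "summable (\<lambda>n. r^n)" using r by (intro summable_geometric) simp
      show "\<exists>N. \<forall>n\<ge>N. norm (r^(2*n+1) * sin ((2 * real n + 1) * \<theta>) / (2 * real n + 1)) \<le> r^n"
        using odd_sin_term_bound[of r] r by auto
    qed
    then show ?thesis unfolding f'_def odd_sin_series_def by (simp add: suminf_minus)
  qed
  ultimately show ?thesis by simp
qed


lemma Ln_1_plus_minus_sums:
  fixes z :: complex assumes z: "norm z < 1"
  shows "(\<lambda>n. 2 * z^(2*n+1) / of_nat (2*n+1)) sums (Ln (1 + z) - Ln (1 - z))"
proof -
  define g where "g n = z^n / of_nat n - (-z)^n / of_nat n" for n
  have "g sums (Ln (1 + z) - Ln (1 - z))"
    unfolding g_def using sums_diff[OF Ln_series'[OF z] Ln_series'[of "-z"]] z by simp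
  moreover have "(\<lambda>n. g (2*n+1)) sums c \<longleftrightarrow> g sums c" for c
  proof (rule sums_mono_reindex)
    show "strict_mono (\<lambda>n::nat. 2*n+1)" by (auto simp: strict_mono_def)
    show "g n = 0" if "n \<notin> range (\<lambda>n::nat. 2*n+1)" for n
    proof -
      have "even n" using that oddE by (metis rangeI)
      then show ?thesis by (simp add: g_def power_minus_even)
    qed
  qed
  ultimately have "(\<lambda>n. g (2*n+1)) sums (Ln (1 + z) - Ln (1 - z))" by simp
  moreover have "g (2*n+1) = 2 * z^(2*n+1) / of_nat (2*n+1)" for n
    by (simp add: g_def power_minus_odd field_simps)
  ultimately show ?thesis by simp
qed

lemma odd_sin_series_Arg:
  assumes r: "0 \<le> r" "r < 1"
  shows "odd_sin_series r u = (Arg (1 + rcis r u) - Arg (1 - rcis r u)) / 2"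
proof -
  define z where "z = rcis r u"
  have z: "norm z < 1" using r by (simp add: z_def)
  have "1 + z \<noteq> 0" "1 - z \<noteq> 0" using z by (auto simp: add_eq_0_iff)
  moreover have "Im (2 * z^(2*n+1) / of_nat (2*n+1))
      = 2 * (r^(2*n+1) * sin ((2 * real n + 1) * u) / (2 * real n + 1))" for n
  proof -
    have "z^(2*n+1) = rcis (r^(2*n+1)) (real (2*n+1) * u)" unfolding z_def by (rule DeMoivre2)
    then show ?thesis by (simp add: algebra_simps)
  qed
  ultimately have "(\<lambda>n. 2 * (r^(2*n+1) * sin ((2 * real n + 1) * u) / (2 * real n + 1)))
      sums (Arg (1 + z) - Arg (1 - z))"
    using sums_Im[OF Ln_1_plus_minus_sums[OF z]] by (simp add: Arg_eq_Im_Ln)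
  from sums_divide[OF this, of 2]
  have "(\<lambda>n. r^(2*n+1) * sin ((2 * real n + 1) * u) / (2 * real n + 1))
      sums ((Arg (1 + z) - Arg (1 - z)) / 2)" by (simp only: nonzero_mult_div_cancel_left[of 2])
  then show ?thesis unfolding odd_sin_series_def z_def by (rule sums_unique[symmetric])
qed

lemma abs_odd_sin_series_le:
  assumes "0 \<le> r" "r < 1" shows "\<bar>odd_sin_series r u\<bar> \<le> pi"
  using odd_sin_series_Arg[OF assms, of u] Arg_bounded[of "1 + rcis r u"] Arg_bounded[of "1 - rcis r u"]
    by auto

definition abel_radius :: "nat \<Rightarrow> real" where "abel_radius k = 1 - inverse (real (Suc k)) / 2"

lemma abel_radius_bounds: "0 \<le> abel_radius k" "abel_radius k < 1"
proof -
  have "inverse (real (Suc k)) \<le> 1" by (simp add: inverse_le_1_iff)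
  moreover have "0 < inverse (real (Suc k))" by simp
  ultimately show "0 \<le> abel_radius k" "abel_radius k < 1" unfolding abel_radius_def by auto
qed

lemma abel_radius_tendsto_1: "abel_radius \<longlonglongrightarrow> 1"
proof -
  have "(\<lambda>k. 1 - inverse (real (Suc k)) / 2) \<longlonglongrightarrow> 1 - 0 / 2"
    by (intro tendsto_intros LIMSEQ_inverse_real_of_nat) simp
  then show ?thesis by (simp add: abel_radius_def[abs_def])
qed

lemma Arg_1_plus_cis:
  assumes "0 < u" "u < pi" shows "Arg (1 + cis u) = u / 2"
proof (rule Arg_unique')
  show "0 < 2 * cos (u/2)" using assms by (simp add: cos_gt_zero_pi)
  show "u / 2 \<in> {-pi<..pi}" using assms by auto
  have "cos u = cos (2 * (u/2))" by simp
  then have c: "cos u = 2 * cos (u/2) ^ 2 - 1" by (simp only: cos_double_cos)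
  have "sin u = sin (2 * (u/2))" by simp
  then have s: "sin u = 2 * sin (u/2) * cos (u/2)" by (simp only: sin_double)
  show "1 + cis u = rcis (2 * cos (u/2)) (u/2)"
    by (simp add: complex_eq_iff c s power2_eq_square)
qed

lemma Arg_1_minus_cis:
  assumes "0 < u" "u < pi" shows "Arg (1 - cis u) = u / 2 - pi / 2"
proof (rule Arg_unique')
  show "0 < 2 * sin (u/2)" using assms by (simp add: sin_gt_zero)
  show "u / 2 - pi / 2 \<in> {-pi<..pi}" using assms by auto
  have "cos u = cos (2 * (u/2))" by simp
  then have c: "cos u = 1 - 2 * sin (u/2) ^ 2" by (simp only: cos_double_sin)
  have "sin u = sin (2 * (u/2))" by simp
  then have s: "sin u = 2 * sin (u/2) * cos (u/2)" by (simp only: sin_double)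
  have c2: "cos (u/2 - pi/2) = sin (u/2)" by (simp add: cos_diff)
  have s2: "sin (u/2 - pi/2) = - cos (u/2)" by (simp add: sin_diff)
  show "1 - cis u = rcis (2 * sin (u/2)) (u/2 - pi/2)"
    by (simp add: complex_eq_iff c s c2 s2 power2_eq_square)
qed

lemma odd_sin_series_abel_limit:
  assumes "0 < u" "u < pi"
  shows "(\<lambda>k. odd_sin_series (abel_radius k) u) \<longlonglongrightarrow> pi / 4"
proof -
  have z: "(\<lambda>k. rcis (abel_radius k) u) \<longlonglongrightarrow> cis u"
  proof -
    have "(\<lambda>k. complex_of_real (abel_radius k) * cis u) \<longlonglongrightarrow> complex_of_real 1 * cis u"
      by (intro tendsto_intros abel_radius_tendsto_1)
    then show ?thesis by (simp add: rcis_def)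
  qed
  have "cos pi < cos u" using assms by (intro cos_monotone_0_pi) auto
  then have p1: "1 + cis u \<notin> \<real>\<^sub>\<le>\<^sub>0" by (auto simp: complex_nonpos_Reals_iff)
  have "cos u < cos 0" using assms by (intro cos_monotone_0_pi) auto
  then have p2: "1 - cis u \<notin> \<real>\<^sub>\<le>\<^sub>0" by (auto simp: complex_nonpos_Reals_iff)
  have a1: "(\<lambda>k. Arg (1 + rcis (abel_radius k) u)) \<longlonglongrightarrow> Arg (1 + cis u)"
    by (rule isCont_tendsto_compose[OF continuous_at_Arg[OF p1]]) (intro tendsto_intros z)
  have a2: "(\<lambda>k. Arg (1 - rcis (abel_radius k) u)) \<longlonglongrightarrow> Arg (1 - cis u)"
    by (rule isCont_tendsto_compose[OF continuous_at_Arg[OF p2]]) (intro tendsto_intros z)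
  have "(\<lambda>k. (Arg (1 + rcis (abel_radius k) u) - Arg (1 - rcis (abel_radius k) u)) / 2)
      \<longlonglongrightarrow> (Arg (1 + cis u) - Arg (1 - cis u)) / 2"
    by (rule tendsto_divide[OF tendsto_diff[OF a1 a2] tendsto_const]) simp
  moreover have "(Arg (1 + cis u) - Arg (1 - cis u)) / 2 = pi / 4"
    using Arg_1_plus_cis[OF assms] Arg_1_minus_cis[OF assms] by simp
  ultimately show ?thesis by (simp add: odd_sin_series_Arg[OF abel_radius_bounds])
qed

lemma continuous_on_odd_cos_series_radius: "continuous_on {0..1} (\<lambda>r. odd_cos_series r \<theta>)"
proof (rule uniform_limit_theorem)
  let ?f = "\<lambda>i r. r^(2*i+1) * cos ((2 * real i + 1) * \<theta>) / (2 * real i + 1)^2"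
  show "uniform_limit {0..1} (\<lambda>n r. \<Sum>i<n. ?f i r) (\<lambda>r. odd_cos_series r \<theta>) sequentially"
    unfolding odd_cos_series_def
  proof (rule Weierstrass_m_test[OF _ summable_inverse_odd_squares])
    fix n and r :: real assume "r \<in> {0..1}"
    then show "norm (?f n r) \<le> 1 / (2 * real n + 1)^2" using odd_cos_term_bound[of _ r n] by auto
  qed
  show "\<forall>\<^sub>F n in sequentially. continuous_on {0..1} (\<lambda>r. \<Sum>i<n. ?f i r)"
    by (intro always_eventually allI continuous_intros) auto
qed simp

lemma continuous_on_odd_cos_series_1: "continuous_on UNIV (\<lambda>\<theta>. odd_cos_series 1 \<theta>)"
proof (rule uniform_limit_theorem)
  let ?f = "\<lambda>i \<theta>. (1::real)^(2*i+1) * cos ((2 * real i + 1) * \<theta>) / (2 * real i + 1)^2"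
  show "uniform_limit UNIV (\<lambda>n \<theta>. \<Sum>i<n. ?f i \<theta>) (\<lambda>\<theta>. odd_cos_series 1 \<theta>) sequentially"
    unfolding odd_cos_series_def
  proof (rule Weierstrass_m_test[OF _ summable_inverse_odd_squares])
    fix n and \<theta> :: real
    show "norm (?f n \<theta>) \<le> 1 / (2 * real n + 1)^2" using odd_cos_term_bound[of _ 1 n] by auto
  qed
  show "\<forall>\<^sub>F n in sequentially. continuous_on UNIV (\<lambda>\<theta>. \<Sum>i<n. ?f i \<theta>)"
    by (intro always_eventually allI continuous_intros) auto
qed simp

lemma odd_cos_series_1_diff:
  assumes "0 < a" "a \<le> b" "b < pi"
  shows "odd_cos_series 1 b - odd_cos_series 1 a = - (pi/4) * (b - a)"
proof -
  define C S where "C k = odd_cos_series (abel_radius k)" and "S k = odd_sin_series (abel_radius k)" for k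
  have I: "((\<lambda>u. - S k u) has_integral (C k b - C k a)) {a..b}" for k
  proof (rule fundamental_theorem_of_calculus[OF assms(2)])
    fix x assume "x \<in> {a..b}"
    have "(C k has_real_derivative - S k x) (at x within {a..b})"
      unfolding C_def S_def
      by (rule has_field_derivative_at_within, rule odd_cos_series_deriv[OF abel_radius_bounds])
    then show "(C k has_vector_derivative - S k x) (at x within {a..b})"
      by (simp add: has_real_derivative_iff_has_vector_derivative)
  qed
  have "(\<lambda>k. integral {a..b} (\<lambda>u. - S k u)) \<longlonglongrightarrow> integral {a..b} (\<lambda>u. - (pi/4))"
  proof (rule dominated_convergence(2))
    show "(\<lambda>u. - S k u) integrable_on {a..b}" for k using I[of k] by blast
    show "(\<lambda>u. pi) integrable_on {a..b}" by (rule integrable_const_ivl)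
    show "norm (- S k u) \<le> pi" for k u
      using abs_odd_sin_series_le[OF abel_radius_bounds] by (simp add: S_def)
    show "(\<lambda>k. - S k u) \<longlonglongrightarrow> - (pi/4)" if "u \<in> {a..b}" for u
      using that assms unfolding S_def by (intro tendsto_minus odd_sin_series_abel_limit) auto
  qed
  moreover have "integral {a..b} (\<lambda>u. - S k u) = C k b - C k a" for k
    using I[of k] by (rule integral_unique)
  ultimately have "(\<lambda>k. C k b - C k a) \<longlonglongrightarrow> - (pi/4) * (b - a)"
    using assms(2) by (simp add: mult.commute)
  moreover have "(\<lambda>k. C k c) \<longlonglongrightarrow> odd_cos_series 1 c" for c
    unfolding C_def
    by (rule continuous_on_tendsto_compose[OF continuous_on_odd_cos_series_radius abel_radius_tendsto_1])
       (auto intro!: always_eventually simp: abel_radius_bounds less_imp_le)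
  then have "(\<lambda>k. C k b - C k a) \<longlonglongrightarrow> odd_cos_series 1 b - odd_cos_series 1 a"
    by (intro tendsto_diff)
  ultimately show ?thesis using LIMSEQ_unique by blast
qed

lemma odd_cos_series_1_pi_half: "odd_cos_series 1 (pi/2) = 0"
proof -
  have "cos ((2 * real n + 1) * (pi / 2)) = 0" for n
  proof -
    have "odd (2*n+1)" by simp
    then have "cos (real (2*n+1) * (pi/2)) = 0" by (subst cos_zero_iff) blast
    moreover have "real (2*n+1) * (pi/2) = (2 * real n + 1) * (pi / 2)" by simp
    ultimately show ?thesis by metis
  qed
  then show ?thesis unfolding odd_cos_series_def by simp
qed

lemma odd_cos_series_1_open:
  assumes "0 < \<theta>" "\<theta> < pi" shows "odd_cos_series 1 \<theta> = pi/4 * (pi/2 - \<theta>)"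
proof (cases "\<theta> \<le> pi/2")
  case True
  from odd_cos_series_1_diff[of \<theta> "pi/2"] True assms show ?thesis
    by (simp add: odd_cos_series_1_pi_half algebra_simps)
next
  case False
  from odd_cos_series_1_diff[of "pi/2" \<theta>] False assms show ?thesis
    by (simp add: odd_cos_series_1_pi_half algebra_simps)
qed

lemma odd_cos_series_1_eq:
  assumes "0 \<le> \<theta>" "\<theta> \<le> pi" shows "odd_cos_series 1 \<theta> = pi/4 * (pi/2 - \<theta>)"
proof -
  let ?g = "\<lambda>\<theta>. odd_cos_series 1 \<theta> - pi/4 * (pi/2 - \<theta>)"
  have c: "continuous_on (closure {0<..<pi}) ?g"
    by (intro continuous_intros continuous_on_subset[OF continuous_on_odd_cos_series_1]) auto
  have m: "\<theta> \<in> closure {0<..<pi}" using assms by simp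
  have "?g \<theta> \<le> 0" by (rule continuous_le_on_closure[OF c m]) (simp add: odd_cos_series_1_open)
  moreover have "?g \<theta> \<ge> 0"
    by (rule continuous_ge_on_closure[OF c m]) (simp add: odd_cos_series_1_open)
  ultimately show ?thesis by simp
qed

lemma inverse_odd_squares_tail_bound:
  assumes "N \<ge> 1"
  shows "summable (\<lambda>n. 1 / (2 * real (n + N) + 1)^2)"
    and "(\<Sum>n. 1 / (2 * real (n + N) + 1)^2) \<le> 1 / (4 * real N)"
proof -
  define F where "F n = 1 / (4 * real (n + N))" for n
  have "(\<lambda>n. 1 / real (n + N)) \<longlonglongrightarrow> 0"
    by (rule LIMSEQ_ignore_initial_segment[OF lim_1_over_n])
  then have "(\<lambda>n. (1/4) * (1 / real (n + N))) \<longlonglongrightarrow> (1/4) * 0"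
    by (intro tendsto_intros)
  then have "F \<longlonglongrightarrow> 0" by (simp add: F_def[abs_def])
  then have tel: "(\<lambda>n. F n - F (Suc n)) sums (F 0 - 0)" by (rule telescope_sums')
  have le: "1 / (2 * real (n + N) + 1)^2 \<le> F n - F (Suc n)" for n
  proof -
    define m where "m = real (n + N)"
    have m1: "m \<ge> 1" using assms by (simp add: m_def)
    have f1: "F n = 1 / (4 * m)" "F (Suc n) = 1 / (4 * (m + 1))" by (simp_all add: F_def m_def)
    have "F n - F (Suc n) = 1 / (4 * m * (m + 1))" unfolding f1 using m1 by (simp add: field_simps)
    moreover have "4 * m * (m + 1) \<le> (2 * m + 1)^2" by (simp add: power2_eq_square algebra_simps)
    then have "1 / (2 * m + 1)^2 \<le> 1 / (4 * m * (m + 1))" using m1 by (intro divide_left_mono) auto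
    ultimately show ?thesis by (simp add: m_def)
  qed
  have sg: "summable (\<lambda>n. F n - F (Suc n))" using tel by (rule sums_summable)
  show s: "summable (\<lambda>n. 1 / (2 * real (n + N) + 1)^2)"
    by (rule summable_comparison_test[OF _ sg]) (use le in auto)
  have "(\<Sum>n. 1 / (2 * real (n + N) + 1)^2) \<le> (\<Sum>n. F n - F (Suc n))"
    by (rule suminf_le[OF le s sg])
  also have "\<dots> = F 0" using tel by (simp add: sums_iff)
  finally show "(\<Sum>n. 1 / (2 * real (n + N) + 1)^2) \<le> 1 / (4 * real N)" by (simp add: F_def)
qed

lemma arcsin_chebyshev_approx:
  assumes t: "-1 \<le> t" "t \<le> 1" and N: "N \<ge> 1"
  shows "\<bar>arcsin t - (4/pi) * (\<Sum>n<N. cos ((2 * real n + 1) * arccos t) / (2 * real n + 1)^2)\<bar> \<le> 1 / real N"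
proof -
  define \<theta> where "\<theta> = arccos t"
  have th: "0 \<le> \<theta>" "\<theta> \<le> pi" unfolding \<theta>_def using t
    by (auto intro: arccos_lbound arccos_ubound)
  define T where "T n = cos ((2 * real n + 1) * \<theta>) / (2 * real n + 1)^2" for n
  have sT: "summable T"
    by (rule summable_comparison_test[OF _ summable_inverse_odd_squares])
       (use odd_cos_term_bound[of _ 1] in \<open>auto simp: T_def\<close>)
  have CT: "odd_cos_series 1 \<theta> = suminf T" by (simp add: odd_cos_series_def T_def[abs_def])
  have as: "arcsin t = pi/2 - \<theta>" unfolding \<theta>_def using t by (rule arcsin_arccos_eq)
  have split: "suminf T = (\<Sum>n. T (n + N)) + (\<Sum>n<N. T n)"
    by (rule suminf_split_initial_segment[OF sT])
  have "arcsin t - (4/pi) * (\<Sum>n<N. T n) = (4/pi) * (\<Sum>n. T (n + N))"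
  proof -
    have e1: "suminf T = pi/4 * (pi/2 - \<theta>)" using odd_cos_series_1_eq[OF th] CT by simp
    have e2: "arcsin t = (4/pi) * suminf T" unfolding e1 as by (simp add: field_simps)
    show ?thesis unfolding e2 split by (simp add: algebra_simps)
  qed
  moreover have "\<bar>\<Sum>n. T (n + N)\<bar> \<le> 1 / (4 * real N)"
  proof -
    have tb: "\<bar>T (n + N)\<bar> \<le> 1 / (2 * real (n + N) + 1)^2" for n
      using odd_cos_term_bound[of "cos ((2 * real (n+N) + 1) * \<theta>)" 1 "n + N"] by (simp add: T_def)
    have sa: "summable (\<lambda>n. \<bar>T (n + N)\<bar>)"
      by (rule summable_comparison_test[OF _ inverse_odd_squares_tail_bound(1)[OF N]]) (use tb in auto)
    have "\<bar>\<Sum>n. T (n + N)\<bar> \<le> (\<Sum>n. \<bar>T (n + N)\<bar>)"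
      by (rule summable_rabs[OF sa])
    also have "\<dots> \<le> (\<Sum>n. 1 / (2 * real (n + N) + 1)^2)"
      by (rule suminf_le[OF tb sa inverse_odd_squares_tail_bound(1)[OF N]])
    also have "\<dots> \<le> 1 / (4 * real N)" by (rule inverse_odd_squares_tail_bound(2)[OF N])
    finally show ?thesis .
  qed
  ultimately have "\<bar>arcsin t - (4/pi) * (\<Sum>n<N. T n)\<bar> \<le> (4/pi) * (1 / (4 * real N))"
  proof -
    assume A: "arcsin t - (4/pi) * (\<Sum>n<N. T n) = (4/pi) * (\<Sum>n. T (n + N))"
      and B: "\<bar>\<Sum>n. T (n + N)\<bar> \<le> 1 / (4 * real N)"
    have "\<bar>arcsin t - (4/pi) * (\<Sum>n<N. T n)\<bar> = (4/pi) * \<bar>\<Sum>n. T (n + N)\<bar>"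
      unfolding A by (simp add: abs_mult)
    also have "\<dots> \<le> (4/pi) * (1 / (4 * real N))" by (rule mult_left_mono[OF B]) simp
    finally show ?thesis .
  qed
  also have "\<dots> \<le> 1 / real N" using N pi_gt3 by (simp add: field_simps)
  finally show ?thesis by (simp add: T_def \<theta>_def)
qed

lemma unit_sph_nonempty: "unit_sph \<noteq> ({} :: (real^'n) set)"
  unfolding unit_sph_def by (simp add: sphere_eq_empty)

lemma compact_unit_sph: "compact (unit_sph :: (real^'n) set)"
  unfolding unit_sph_def by (rule compact_sphere)

lemma continuous_on_sph_harm:
  assumes "g \<in> sph_harm j" shows "continuous_on unit_sph g"
proof -
  obtain H where H: "homogeneous j H" "\<forall>\<xi>\<in>unit_sph. g \<xi> = H \<xi>"
    by (rule sph_harmE[OF assms]) blast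
  show ?thesis by (rule continuous_on_eq[OF continuous_on_homogeneous[OF H(1)]]) (use H(2) in auto)
qed

lemma continuous_on_Pi_sph:
  fixes h :: "real^'n \<Rightarrow> real"
  assumes "h \<in> Pi_sph l" shows "continuous_on unit_sph h"
proof -
  from assms obtain g where g: "\<forall>i\<le>l. g i \<in> sph_harm i" "\<forall>\<xi>\<in>unit_sph. h \<xi> = (\<Sum>i\<le>l. g i \<xi>)"
    unfolding Pi_sph_def by blast
  have "continuous_on unit_sph (\<lambda>\<xi>. \<Sum>i\<le>l. g i \<xi>)"
    using g(1) by (intro continuous_on_sum continuous_on_sph_harm) auto
  then show ?thesis by (rule continuous_on_eq) (use g(2) in auto)
qed

lemma abs_le_sup_norm_sph:
  fixes f :: "real^'n \<Rightarrow> real"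
  assumes "continuous_on unit_sph f" "\<xi> \<in> unit_sph" shows "\<bar>f \<xi>\<bar> \<le> sup_norm_sph f"
proof -
  have "compact ((\<lambda>\<xi>. \<bar>f \<xi>\<bar>) ` unit_sph)"
    by (intro compact_continuous_image continuous_intros assms(1) compact_unit_sph)
  then have "bdd_above ((\<lambda>\<xi>. \<bar>f \<xi>\<bar>) ` unit_sph)"
    by (intro bounded_imp_bdd_above compact_imp_bounded)
  then show ?thesis unfolding sup_norm_sph_def by (rule cSUP_upper[OF assms(2)])
qed

lemma sup_norm_sph_le:
  fixes f :: "real^'n \<Rightarrow> real"
  assumes "\<And>\<xi>. \<xi> \<in> unit_sph \<Longrightarrow> \<bar>f \<xi>\<bar> \<le> B"
  shows "sup_norm_sph f \<le> B"
  unfolding sup_norm_sph_def by (rule cSUP_least[OF unit_sph_nonempty]) (use assms in auto)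

lemma sup_norm_sph_nonneg:
  fixes f :: "real^'n \<Rightarrow> real"
  assumes "continuous_on unit_sph f" shows "0 \<le> sup_norm_sph f"
proof -
  obtain \<xi> :: "real^'n" where "\<xi> \<in> unit_sph" using unit_sph_nonempty by blast
  from abs_le_sup_norm_sph[OF assms this] show ?thesis by linarith
qed

lemma dist_Pi_le_sup_norm:
  fixes f :: "real^'n \<Rightarrow> real"
  assumes "continuous_on unit_sph f" "h \<in> Pi_sph l"
  shows "dist_Pi f l \<le> sup_norm_sph (\<lambda>\<xi>. f \<xi> - h \<xi>)"
  unfolding dist_Pi_def
proof (rule cINF_lower[OF _ assms(2)])
  show "bdd_below ((\<lambda>h. sup_norm_sph (\<lambda>\<xi>. f \<xi> - h \<xi>)) ` Pi_sph l)"
  proof (rule bdd_belowI)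
    fix y assume "y \<in> (\<lambda>h. sup_norm_sph (\<lambda>\<xi>. f \<xi> - h \<xi>)) ` Pi_sph l"
    then obtain h' where "h' \<in> Pi_sph l" "y = sup_norm_sph (\<lambda>\<xi>. f \<xi> - h' \<xi>)" by blast
    then show "0 \<le> y"
      using sup_norm_sph_nonneg[of "\<lambda>\<xi>. f \<xi> - h' \<xi>"] assms(1) continuous_on_Pi_sph
      by (auto intro: continuous_on_diff)
  qed
qed

lemma dist_Pi_le:
  fixes f :: "real^'n \<Rightarrow> real"
  assumes "continuous_on unit_sph f" "h \<in> Pi_sph l" "\<And>\<xi>. \<xi> \<in> unit_sph \<Longrightarrow> \<bar>f \<xi> - h \<xi>\<bar> \<le> B"
  shows "dist_Pi f l \<le> B"
  using dist_Pi_le_sup_norm[OF assms(1,2)] sup_norm_sph_le[of "\<lambda>\<xi>. f \<xi> - h \<xi>" B] assms(3)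
  by fastforce

lemma inner_unit_sph_bounds:
  assumes "x \<in> unit_sph" "\<xi> \<in> unit_sph"
  shows "-1 \<le> x \<bullet> \<xi>" "x \<bullet> \<xi> \<le> 1"
proof -
  have "norm x = 1" "norm \<xi> = 1" using assms by (auto simp: unit_sph_def)
  then have "\<bar>x \<bullet> \<xi>\<bar> \<le> 1" using Cauchy_Schwarz_ineq2[of x \<xi>] by simp
  then show "-1 \<le> x \<bullet> \<xi>" "x \<bullet> \<xi> \<le> 1" by auto
qed

definition kernel_profile :: "real \<Rightarrow> real" where
  "kernel_profile t = (t + 1) * (pi - arccos t) / (4 * pi)"

lemma K_inf_eq_kernel_profile: "K_inf x \<xi> = kernel_profile (x \<bullet> \<xi>)"
  by (simp add: K_inf_def kernel_profile_def)

lemma kernel_profile_bounds: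
  assumes "-1 \<le> s" "s \<le> 1"
  shows "0 \<le> kernel_profile s" "kernel_profile s \<le> 1/2"
proof -
  have a: "0 \<le> arccos s" "arccos s \<le> pi" using assms by (auto intro: arccos_lbound arccos_ubound)
  then show "0 \<le> kernel_profile s" using assms by (simp add: kernel_profile_def)
  have "(s + 1) * (pi - arccos s) \<le> 2 * pi" using assms a by (intro mult_mono) auto
  then show "kernel_profile s \<le> 1/2" by (simp add: kernel_profile_def field_simps)
qed

lemma kernel_profile_chebyshev_approx:
  assumes s: "-1 \<le> s" "s \<le> 1" and N: "N \<ge> 1"
  shows "\<bar>kernel_profile s -
          (s + 1) * (pi/2 + (4/pi) * (\<Sum>n<N. chebyshev (2*n+1) s / (2 * real n + 1)^2)) / (4 * pi)\<bar>
         \<le> 1 / real N"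
proof -
  define E where "E = arcsin s - (4/pi) * (\<Sum>n<N. cos ((2 * real n + 1) * arccos s) / (2 * real n + 1)^2)"
  have E: "\<bar>E\<bar> \<le> 1 / real N" unfolding E_def by (rule arcsin_chebyshev_approx[OF s N])
  have ch: "chebyshev (2*n+1) s = cos ((2 * real n + 1) * arccos s)" for n
    using chebyshev_cos[of "2*n+1" "arccos s"] s by (simp add: cos_arccos algebra_simps)
  have "kernel_profile s -
          (s + 1) * (pi/2 + (4/pi) * (\<Sum>n<N. chebyshev (2*n+1) s / (2 * real n + 1)^2)) / (4 * pi)
        = (s + 1) * E / (4 * pi)"
    unfolding kernel_profile_def E_def ch using arcsin_arccos_eq[OF s]
    by (simp add: diff_divide_distrib[symmetric] right_diff_distrib[symmetric])
  also have "\<bar>(s + 1) * E / (4 * pi)\<bar> = (s + 1) * \<bar>E\<bar> / (4 * pi)" using s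
    by (simp add: abs_mult)
  also have "\<dots> \<le> 2 * (1 / real N) / (4 * pi)"
    using s E by (intro divide_right_mono mult_mono) auto
  also have "\<dots> \<le> 1 / real N" using N pi_gt3 by (simp add: field_simps)
  finally show ?thesis .
qed

lemma K_inf_mult_homogeneous_approx:
  fixes P :: "real^'n \<Rightarrow> real"
  assumes P: "homogeneous j P" and x: "x \<in> unit_sph" and N: "N \<ge> 1"
  obtains h where "poly_deg_le (2 * N + j) h"
    "\<And>\<xi>. \<xi> \<in> unit_sph \<Longrightarrow> \<bar>K_inf x \<xi> * P \<xi> - h \<xi>\<bar> \<le> \<bar>P \<xi>\<bar> / real N"
proof
  define D where "D = 2 * N - 1 + j"
  define S where "S \<xi> = (\<Sum>n<N. (1 / (2 * real n + 1)^2) * (chebyshev (2*n+1) (x \<bullet> \<xi>) * P \<xi>))" for \<xi>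
  define B where "B \<xi> = (pi/2) * P \<xi> + (4/pi) * S \<xi>" for \<xi>
  define h where "h \<xi> = (1/(4*pi)) * ((x \<bullet> \<xi>) * B \<xi> + B \<xi>)" for \<xi>
  have "poly_deg_le D S"
    unfolding S_def
  proof (rule poly_deg_le_sum)
    fix n assume "n \<in> {..<N}"
    then have "2*n+1 + j \<le> D" unfolding D_def by simp
    then show "poly_deg_le D (\<lambda>\<xi>. (1 / (2 * real n + 1)^2) * (chebyshev (2*n+1) (x \<bullet> \<xi>) * P \<xi>))"
      by (intro poly_deg_le_cmult poly_deg_le_mono[OF poly_deg_le_chebyshev_mult[OF P]])
  qed
  then have B: "poly_deg_le D B" unfolding B_def
    by (intro poly_deg_le_add poly_deg_le_cmult homogeneous_imp_poly_deg_le[OF P]) (simp add: D_def)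
  have "poly_deg_le (D + 1) h" unfolding h_def
    by (intro poly_deg_le_cmult poly_deg_le_add poly_deg_le_mult[OF homogeneous_inner B]
        poly_deg_le_mono[OF B]) simp
  moreover have "D + 1 = 2 * N + j" using N by (simp add: D_def)
  ultimately show "poly_deg_le (2 * N + j) h" by simp
  fix \<xi> :: "real^'n" assume \<xi>: "\<xi> \<in> unit_sph"
  define s where "s = x \<bullet> \<xi>"
  have s: "-1 \<le> s" "s \<le> 1" using inner_unit_sph_bounds[OF x \<xi>] unfolding s_def by auto
  define Q where "Q = (\<Sum>n<N. chebyshev (2*n+1) s / (2 * real n + 1)^2)"
  have "S \<xi> = Q * P \<xi>" unfolding S_def Q_def s_def by (simp add: sum_distrib_right)
  then have "h \<xi> = (s + 1) * (pi/2 + (4/pi) * Q) / (4 * pi) * P \<xi>"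
    unfolding h_def B_def by (simp add: s_def field_simps)
  then have "\<bar>K_inf x \<xi> * P \<xi> - h \<xi>\<bar> =
      \<bar>kernel_profile s - (s + 1) * (pi/2 + (4/pi) * Q) / (4 * pi)\<bar> * \<bar>P \<xi>\<bar>"
    unfolding K_inf_eq_kernel_profile s_def by (simp add: abs_mult[symmetric] left_diff_distrib)
  also have "\<dots> \<le> (1 / real N) * \<bar>P \<xi>\<bar>"
    unfolding Q_def by (intro mult_right_mono kernel_profile_chebyshev_approx[OF s N]) simp
  finally show "\<bar>K_inf x \<xi> * P \<xi> - h \<xi>\<bar> \<le> \<bar>P \<xi>\<bar> / real N" by simp
qed

lemma dist_Pi_K_inf_mult_sph_harm:
  fixes g :: "real^'n \<Rightarrow> real"
  assumes g: "g \<in> sph_harm j" and x: "x \<in> unit_sph" and l: "l \<ge> 1"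
  shows "dist_Pi (\<lambda>\<xi>. K_inf x \<xi> * g \<xi>) l \<le> 4 * (real j + 1) / real l * sup_norm_sph g"
proof -
  obtain P where P: "homogeneous j P" "\<forall>\<xi>\<in>unit_sph. g \<xi> = P \<xi>"
    by (rule sph_harmE[OF g]) blast
  have cg: "continuous_on unit_sph g" by (rule continuous_on_sph_harm[OF g])
  define M where "M = sup_norm_sph g"
  have M: "0 \<le> M" "\<And>\<xi>. \<xi> \<in> unit_sph \<Longrightarrow> \<bar>g \<xi>\<bar> \<le> M"
    unfolding M_def using sup_norm_sph_nonneg[OF cg] abs_le_sup_norm_sph[OF cg] by auto
  have cK: "continuous_on unit_sph (\<lambda>\<xi>. K_inf x \<xi> * g \<xi>)"
    unfolding K_inf_def using inner_unit_sph_bounds[OF x] by (intro continuous_intros cg) auto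
  show ?thesis
  proof (cases "l < 2 * j + 2")
    case True
    have "dist_Pi (\<lambda>\<xi>. K_inf x \<xi> * g \<xi>) l \<le> (1/2) * M"
    proof (rule dist_Pi_le[OF cK Pi_sph_zero])
      fix \<xi> :: "real^'n" assume \<xi>: "\<xi> \<in> unit_sph"
      then have "\<bar>K_inf x \<xi>\<bar> * \<bar>g \<xi>\<bar> \<le> (1/2) * M"
        using kernel_profile_bounds[OF inner_unit_sph_bounds[OF x \<xi>]] M
        by (intro mult_mono) (auto simp: K_inf_eq_kernel_profile)
      then show "\<bar>K_inf x \<xi> * g \<xi> - 0\<bar> \<le> (1/2) * M" by (simp add: abs_mult)
    qed
    also have "(1/2) * M \<le> 4 * (real j + 1) / real l * M"
      using True l by (intro mult_right_mono M(1)) (simp add: field_simps)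
    finally show ?thesis by (simp only: M_def)
  next
    case False
    define N where "N = (l - j) div 2"
    have N: "N \<ge> 1" "2 * N + j \<le> l" "l \<le> 4 * N" using False unfolding N_def by presburger+
    obtain h where h: "poly_deg_le (2 * N + j) h"
      "\<And>\<xi>. \<xi> \<in> unit_sph \<Longrightarrow> \<bar>K_inf x \<xi> * P \<xi> - h \<xi>\<bar> \<le> \<bar>P \<xi>\<bar> / real N"
      using K_inf_mult_homogeneous_approx[OF P(1) x N(1)] by blast
    have "dist_Pi (\<lambda>\<xi>. K_inf x \<xi> * g \<xi>) l \<le> M / real N"
    proof (rule dist_Pi_le[OF cK poly_deg_le_in_Pi_sph[OF h(1) N(2)]])
      fix \<xi> :: "real^'n" assume "\<xi> \<in> unit_sph"
      then show "\<bar>K_inf x \<xi> * g \<xi> - h \<xi>\<bar> \<le> M / real N"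
        using h(2) M(2) P(2) by (force intro: order_trans divide_right_mono)
    qed
    also have "M / real N \<le> 4 * (real j + 1) / real l * M"
    proof -
      have "M \<le> (real j + 1) * M" using M(1) by (simp add: algebra_simps)
      then have "real l * M \<le> (4 * real N) * ((real j + 1) * M)"
        using N(3) M(1) by (intro mult_mono) auto
      then show ?thesis using N(1) l by (simp add: field_simps)
    qed
    finally show ?thesis by (simp only: M_def)
  qed
qed

lemma dist_Pi_sph_harm_mult:
  fixes g :: "real^'n \<Rightarrow> real"
  assumes g: "g \<in> sph_harm j" and h: "h \<in> sph_harm p" and l: "l \<ge> 1"
  shows "dist_Pi (\<lambda>\<xi>. g \<xi> * h \<xi>) l \<le> (real j + real p) / real l * sup_norm_sph g * sup_norm_sph h"
proof -
  obtain G where G: "homogeneous j G" "\<forall>\<xi>\<in>unit_sph. g \<xi> = G \<xi>"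
    by (rule sph_harmE[OF g]) blast
  obtain H where H: "homogeneous p H" "\<forall>\<xi>\<in>unit_sph. h \<xi> = H \<xi>"
    by (rule sph_harmE[OF h]) blast
  have cg: "continuous_on unit_sph g" and ch: "continuous_on unit_sph h"
    using continuous_on_sph_harm g h by auto
  have cgh: "continuous_on unit_sph (\<lambda>\<xi>. g \<xi> * h \<xi>)" by (intro continuous_intros cg ch)
  define Mg Mh where "Mg = sup_norm_sph g" and "Mh = sup_norm_sph h"
  have M: "0 \<le> Mg" "0 \<le> Mh" "\<And>\<xi>. \<xi> \<in> unit_sph \<Longrightarrow> \<bar>g \<xi>\<bar> \<le> Mg \<and> \<bar>h \<xi>\<bar> \<le> Mh"
    unfolding Mg_def Mh_def using sup_norm_sph_nonneg abs_le_sup_norm_sph cg ch by auto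
  show ?thesis
  proof (cases "j + p \<le> l")
    case True
    have "(\<lambda>\<xi>. G \<xi> * H \<xi>) \<in> Pi_sph l"
      by (rule homogeneous_in_Pi_sph[OF homogeneous_mult[OF G(1) H(1)] True])
    then have "(\<lambda>\<xi>. g \<xi> * h \<xi>) \<in> Pi_sph l"
      by (rule Pi_sph_cong) (use G(2) H(2) in auto)
    then have "dist_Pi (\<lambda>\<xi>. g \<xi> * h \<xi>) l \<le> 0" by (rule dist_Pi_le[OF cgh]) simp
    also have "0 \<le> (real j + real p) / real l * Mg * Mh" using M by simp
    finally show ?thesis by (simp only: Mg_def Mh_def)
  next
    case False
    have "dist_Pi (\<lambda>\<xi>. g \<xi> * h \<xi>) l \<le> Mg * Mh"
    proof (rule dist_Pi_le[OF cgh Pi_sph_zero])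
      fix \<xi> :: "real^'n" assume "\<xi> \<in> unit_sph"
      then show "\<bar>g \<xi> * h \<xi> - 0\<bar> \<le> Mg * Mh" using M by (simp add: abs_mult mult_mono)
    qed
    also have "Mg * Mh \<le> (real j + real p) / real l * Mg * Mh"
    proof -
      have "1 \<le> (real j + real p) / real l" using False l by (simp add: field_simps)
      from mult_right_mono[OF this, of "Mg * Mh"] M(1,2) show ?thesis by (simp add: mult.assoc)
    qed
    finally show ?thesis by (simp only: Mg_def Mh_def)
  qed
qed

theorem lemma6:
  assumes "CARD('n) \<ge> 2"
  shows "\<exists>C>0. \<forall>(j::nat) (p::nat) (gj :: real^'n \<Rightarrow> real) gp x (l::nat).
           gj \<in> sph_harm j \<longrightarrow> gp \<in> sph_harm p \<longrightarrow> x \<in> unit_sph \<longrightarrow> l \<ge> 1 \<longrightarrow>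
           dist_Pi (\<lambda>\<xi>. K_inf x \<xi> * gj \<xi>) l \<le> C * (real j + 1) / real l * sup_norm_sph gj \<and>
           dist_Pi (\<lambda>\<xi>. gj \<xi> * gp \<xi>) l
              \<le> C * (real j + real p) / real l * sup_norm_sph gj * sup_norm_sph gp"
proof (intro exI[of _ "4::real"] conjI allI impI)
  fix j p :: nat and gj gp :: "real^'n \<Rightarrow> real" and x :: "real^'n" and l :: nat
  assume gj: "gj \<in> sph_harm j" and gp: "gp \<in> sph_harm p" and x: "x \<in> unit_sph" and l: "l \<ge> 1"
  show "dist_Pi (\<lambda>\<xi>. K_inf x \<xi> * gj \<xi>) l \<le> 4 * (real j + 1) / real l * sup_norm_sph gj"
    by (rule dist_Pi_K_inf_mult_sph_harm[OF gj x l])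
  define B where "B = (real j + real p) / real l * sup_norm_sph gj * sup_norm_sph gp"
  have "0 \<le> B" unfolding B_def
    by (intro mult_nonneg_nonneg divide_nonneg_nonneg sup_norm_sph_nonneg
        continuous_on_sph_harm[OF gj] continuous_on_sph_harm[OF gp]) auto
  have "dist_Pi (\<lambda>\<xi>. gj \<xi> * gp \<xi>) l \<le> B"
    unfolding B_def by (rule dist_Pi_sph_harm_mult[OF gj gp l])
  also have "\<dots> \<le> 4 * B" using \<open>0 \<le> B\<close> by linarith
  also have "4 * B = 4 * (real j + real p) / real l * sup_norm_sph gj * sup_norm_sph gp"
    by (simp add: B_def field_simps)
  finally show "dist_Pi (\<lambda>\<xi>. gj \<xi> * gp \<xi>) l
      \<le> 4 * (real j + real p) / real l * sup_norm_sph gj * sup_norm_sph gp" .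
qed simp

end
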